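(* Assume $\xi\neq0$. Then the fixed locus $\mathcal M^{N,K}(M_1,M_2)^{\mathbf T_{\mathrm{edge}}}$ is proper (compact).
   Context: Fix integers $N,K,M_1,M_2\ge0$ and $\xi\neq 0$. $\mathcal M^{N,K}(M_1,M_2)$ is the quotient by $U(M_1)\times U(M_2)$ of the space of tuples $(X,Y,I,J,\tilde X,\tilde Y,\tilde I,\tilde J,S)$ with $X,Y\in\mathrm{End}(\mathbb C^{M_1})$, $I\in\mathrm{Hom}(\mathbb C^N,\mathbb C^{M_1})$, $J\in\mathrm{Hom}(\mathbb C^{M_1},\mathbb C^N)$, $\tilde X,\tilde Y\in\mathrm{End}(\mathbb C^{M_2})$, $\tilde I\in\mathrm{Hom}(\mathbb C^K,\mathbb C^{M_2})$, $\tilde J\in\mathrm{Hom}(\mathbb C^{M_2},\mathbb C^K)$, $S\in\mathrm{Hom}(\mathbb C^{M_1},\mathbb C^{M_2})$ satisfying $[X,Y]+IJ=0$, $[\tilde X,\tilde Y]+\tilde I\tilde J=0$, $[X,X^\dagger]+[Y,Y^\dagger]+II^\dagger-J^\dagger J-S^\dagger S=\xi1_{M_1}$, $[\tilde X,\tilde X^\dagger]+[\tilde Y,\tilde Y^\dagger]+\tilde I\tilde I^\dagger-\tilde J^\dagger\tilde J+SS^\dagger=\xi1_{M_2}$, where $(g,h)$ acts by $X\mapsto gXg^{-1}$, $Y\mapsto gYg^{-1}$, $I\mapsto gI$, $J\mapsto Jg^{-1}$, similarly for tilded maps with $h$, $S\mapsto hSg^{-1}$. The torus $\mathbf T_{\mathrm{edge}}=(\mathbb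 C^\times)^5\ni(r_1,r_2,s_1,s_2,t)$ acts by $(X,Y,I,J)\mapsto(r_1X,r_2Y,I,r_1r_2J)$, $(\tilde X,\tilde Y,\tilde I,\tilde J)\mapsto(s_1\tilde X,s_2\tilde Y,\tilde I,s_1s_2\tilde J)$, $S\mapsto tS$. *)

theory Defs
  imports "HOL-Analysis.Analysis"
begin

text \<open>Complex matrices are represented as functions nat => nat => complex;
  an m x n matrix is one vanishing outside rows < m and columns < n.\<close>

type_synonym cmat = "nat \<Rightarrow> nat \<Rightarrow> complex"

definition mat_in :: "nat \<Rightarrow> nat \<Rightarrow> cmat \<Rightarrow> bool" where
  "mat_in m n A \<longleftrightarrow> (\<forall>i j. (m \<le> i \<or> n \<le> j) \<longrightarrow> A i j = 0)"

definition mmul :: "nat \<Rightarrow> cmat \<Rightarrow> cmat \<Rightarrow> cmat" where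
  "mmul p A B = (\<lambda>i j. \<Sum>k<p. A i k * B k j)"

definition madj :: "cmat \<Rightarrow> cmat" where
  "madj A = (\<lambda>i j. cnj (A j i))"

definition mid :: "nat \<Rightarrow> cmat" where
  "mid m = (\<lambda>i j. if i = j \<and> i < m then 1 else 0)"

definition unitary :: "nat \<Rightarrow> cmat \<Rightarrow> bool" where
  "unitary m g \<longleftrightarrow> mat_in m m g \<and> mmul m g (madj g) = mid m \<and> mmul m (madj g) g = mid m"

text \<open>Tuples (X, Y, I, J, X~, Y~, I~, J~, S).\<close>
type_synonym qdata = "cmat \<times> cmat \<times> cmat \<times> cmat \<times> cmat \<times> cmat \<times> cmat \<times> cmat \<times> cmat"

definition level_set :: "nat \<Rightarrow> nat \<Rightarrow> nat \<Rightarrow> nat \<Rightarrow> real \<Rightarrow> qdata set" where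
  "level_set N K M1 M2 \<xi> = {(X, Y, I, J, X', Y', I', J', S).
     mat_in M1 M1 X \<and> mat_in M1 M1 Y \<and> mat_in M1 N I \<and> mat_in N M1 J \<and>
     mat_in M2 M2 X' \<and> mat_in M2 M2 Y' \<and> mat_in M2 K I' \<and> mat_in K M2 J' \<and>
     mat_in M2 M1 S \<and>
     (\<forall>i j. mmul M1 X Y i j - mmul M1 Y X i j + mmul N I J i j = 0) \<and>
     (\<forall>i j. mmul M2 X' Y' i j - mmul M2 Y' X' i j + mmul K I' J' i j = 0) \<and>
     (\<forall>i j. (mmul M1 X (madj X) i j - mmul M1 (madj X) X i j)
       + (mmul M1 Y (madj Y) i j - mmul M1 (madj Y) Y i j)
       + mmul N I (madj I) i j - mmul N (madj J) J i j - mmul M2 (madj S) S i j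
       = complex_of_real \<xi> * mid M1 i j) \<and>
     (\<forall>i j. (mmul M2 X' (madj X') i j - mmul M2 (madj X') X' i j)
       + (mmul M2 Y' (madj Y') i j - mmul M2 (madj Y') Y' i j)
       + mmul K I' (madj I') i j - mmul K (madj J') J' i j + mmul M1 S (madj S) i j
       = complex_of_real \<xi> * mid M2 i j)}"

text \<open>Action of (g,h) in U(M1) x U(M2); g^{-1} = g^dagger.\<close>
definition gauge_act :: "nat \<Rightarrow> nat \<Rightarrow> nat \<Rightarrow> nat \<Rightarrow> cmat \<Rightarrow> cmat \<Rightarrow> qdata \<Rightarrow> qdata" where
  "gauge_act N K M1 M2 g h = (\<lambda>(X, Y, I, J, X', Y', I', J', S).
     (mmul M1 (mmul M1 g X) (madj g), mmul M1 (mmul M1 g Y) (madj g),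
      mmul M1 g I, mmul M1 J (madj g),
      mmul M2 (mmul M2 h X') (madj h), mmul M2 (mmul M2 h Y') (madj h),
      mmul M2 h I', mmul M2 J' (madj h),
      mmul M1 (mmul M2 h S) (madj g)))"

definition gauge_orbit :: "nat \<Rightarrow> nat \<Rightarrow> nat \<Rightarrow> nat \<Rightarrow> qdata \<Rightarrow> qdata set" where
  "gauge_orbit N K M1 M2 x = {gauge_act N K M1 M2 g h x | g h. unitary M1 g \<and> unitary M2 h}"

text \<open>The moduli space M^{N,K}(M1,M2) as the set of orbits, with the quotient topology.\<close>
definition moduli :: "nat \<Rightarrow> nat \<Rightarrow> nat \<Rightarrow> nat \<Rightarrow> real \<Rightarrow> qdata set set" where
  "moduli N K M1 M2 \<xi> = gauge_orbit N K M1 M2 ` level_set N K M1 M2 \<xi>"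

definition moduli_top :: "nat \<Rightarrow> nat \<Rightarrow> nat \<Rightarrow> nat \<Rightarrow> real \<Rightarrow> qdata set topology" where
  "moduli_top N K M1 M2 \<xi> = topology (\<lambda>U. U \<subseteq> moduli N K M1 M2 \<xi> \<and>
      openin (top_of_set (level_set N K M1 M2 \<xi>)) (\<Union>U))"

definition msc :: "complex \<Rightarrow> cmat \<Rightarrow> cmat" where
  "msc c A = (\<lambda>i j. c * A i j)"

definition torus_act :: "complex \<Rightarrow> complex \<Rightarrow> complex \<Rightarrow> complex \<Rightarrow> complex \<Rightarrow> qdata \<Rightarrow> qdata" where
  "torus_act r1 r2 s1 s2 t = (\<lambda>(X, Y, I, J, X', Y', I', J', S).
     (msc r1 X, msc r2 Y, I, msc (r1 * r2) J, msc s1 X', msc s2 Y', I', msc (s1 * s2) J', msc t S))"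

end

(* Taking the element (w, w, w, w, w) with w not a root of unity gives unitary (g, h) with
   (g, h) x = w x, and after diagonalising g and h the data become a flow on the M1 + M2 basis
   vectors: squared entries of X, Y, X', Y', S are edge weights, those of I, I' inflows and those of
   J, J' outflows.  The diagonal of the real moment map equations says that every vertex has net
   balance xi, while the fixed-point equations force the eigenvalue phase to get multiplied by w
   along every edge, to be 1 at inflows and w^-2 at outflows.  Cutting the flow along the classes
   of phases differing by powers of w bounds every weight by |xi| (M1 + M2).  So the fixed part of
   the level set is bounded; it is also closed, hence compact, and its image in the quotient is the
   fixed locus. *)

theory Submission
  imports Defs "Jordan_Normal_Form.Char_Poly" "HOL-Computational_Algebra.Fundamental_Theorem_Algebra"
begin

section \<open>Matrix algebra\<close>

lemma mat_in_mmul: "mat_in m p A \<Longrightarrow> mat_in q n B \<Longrightarrow> mat_in m n (mmul k A B)"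
  by (auto simp: mat_in_def mmul_def)

lemma mat_in_madj: "mat_in m n A \<Longrightarrow> mat_in n m (madj A)"
  by (auto simp: mat_in_def madj_def)

lemma mat_in_mid: "mat_in m m (mid m)"
  by (auto simp: mat_in_def mid_def)

lemma mat_in_msc: "mat_in m n A \<Longrightarrow> mat_in m n (msc c A)"
  by (auto simp: mat_in_def msc_def)

lemma mmul_apply: "mmul p A B i j = (\<Sum>k<p. A i k * B k j)"
  by (simp add: mmul_def)

lemma mmul_assoc: "mmul p (mmul q A B) C = mmul q A (mmul p B C)"
  unfolding mmul_def
  by (auto simp: sum_distrib_left sum_distrib_right mult.assoc intro!: ext sum.swap[THEN trans])

lemma madj_mmul: "madj (mmul p A B) = mmul p (madj B) (madj A)"
  by (auto simp: madj_def mmul_def mult.commute intro!: ext)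

lemma madj_madj [simp]: "madj (madj A) = A"
  by (simp add: madj_def)

lemma madj_mid [simp]: "madj (mid m) = mid m"
  by (auto simp: madj_def mid_def intro!: ext)

lemma mmul_mid_left: "mat_in m n A \<Longrightarrow> mmul m (mid m) A = A"
proof (intro ext)
  fix i j assume A: "mat_in m n A"
  have "mmul m (mid m) A i j = (\<Sum>k<m. if k = i then A i j else 0)"
    unfolding mmul_def mid_def by (rule sum.cong) auto
  also have "\<dots> = A i j" using A by (auto simp: mat_in_def)
  finally show "mmul m (mid m) A i j = A i j" .
qed

lemma mmul_mid_right: "mat_in m n A \<Longrightarrow> mmul n A (mid n) = A"
proof (intro ext)
  fix i j assume A: "mat_in m n A"
  have "mmul n A (mid n) i j = (\<Sum>k<n. if k = j then A i j else 0)"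
    unfolding mmul_def mid_def by (rule sum.cong) auto
  also have "\<dots> = A i j" using A by (auto simp: mat_in_def)
  finally show "mmul n A (mid n) i j = A i j" .
qed

lemma mmul_msc_left: "mmul p (msc c A) B = msc c (mmul p A B)"
  by (auto simp: mmul_def msc_def sum_distrib_left mult.assoc intro!: ext)

lemma mmul_msc_right: "mmul p A (msc c B) = msc c (mmul p A B)"
  by (auto simp: mmul_def msc_def sum_distrib_left mult.left_commute intro!: ext)

lemma mmul_add_left: "mmul p (\<lambda>i j. A i j + B i j) C = (\<lambda>i j. mmul p A C i j + mmul p B C i j)"
  by (auto simp: mmul_def distrib_right sum.distrib intro!: ext)

lemma mmul_diff_left: "mmul p (\<lambda>i j. A i j - B i j) C = (\<lambda>i j. mmul p A C i j - mmul p B C i j)"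
  by (auto simp: mmul_def left_diff_distrib sum_subtractf intro!: ext)

lemma mmul_scale_left: "mmul p (\<lambda>i j. c * A i j) C = (\<lambda>i j. c * mmul p A C i j)"
  by (auto simp: mmul_def sum_distrib_left mult.assoc intro!: ext)

lemma mmul_add_right: "mmul p C (\<lambda>i j. A i j + B i j) = (\<lambda>i j. mmul p C A i j + mmul p C B i j)"
  by (auto simp: mmul_def distrib_left sum.distrib intro!: ext)

lemma mmul_diff_right: "mmul p C (\<lambda>i j. A i j - B i j) = (\<lambda>i j. mmul p C A i j - mmul p C B i j)"
  by (auto simp: mmul_def right_diff_distrib sum_subtractf intro!: ext)

lemma mmul_scale_right: "mmul p C (\<lambda>i j. c * A i j) = (\<lambda>i j. c * mmul p C A i j)"
  by (auto simp: mmul_def sum_distrib_left mult.left_commute intro!: ext)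

lemma mmul_zero_left: "mmul p (\<lambda>i j. 0) C = (\<lambda>i j. 0)"
  by (auto simp: mmul_def intro!: ext)

lemma mmul_zero_right: "mmul p C (\<lambda>i j. 0) = (\<lambda>i j. 0)"
  by (auto simp: mmul_def intro!: ext)

lemma mmul_madj_diag: "mmul p A (madj A) i i = complex_of_real (\<Sum>k<p. (cmod (A i k))\<^sup>2)"
  unfolding mmul_def madj_def of_real_sum
  by (intro sum.cong refl) (simp add: complex_mult_cnj cmod_power2)

lemma madj_mmul_diag: "mmul p (madj A) A i i = complex_of_real (\<Sum>k<p. (cmod (A k i))\<^sup>2)"
  unfolding mmul_def madj_def of_real_sum
  by (intro sum.cong refl) (simp add: complex_mult_cnj cmod_power2 mult.commute)

definition mat_box :: "real \<Rightarrow> cmat set" where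
  "mat_box B = {A. \<forall>i j. cmod (A i j) \<le> B}"

lemma mat_box_nonneg: "A \<in> mat_box B \<Longrightarrow> 0 \<le> B"
  unfolding mat_box_def using norm_ge_zero order_trans by blast

lemma mat_box_mono: "A \<in> mat_box a \<Longrightarrow> a \<le> b \<Longrightarrow> A \<in> mat_box b"
  unfolding mat_box_def using order_trans by blast

lemma mmul_mat_box:
  assumes "A \<in> mat_box a" "B \<in> mat_box b"
  shows "mmul p A B \<in> mat_box (p * (a * b))"
  unfolding mat_box_def
proof (intro CollectI allI)
  fix i j
  have "cmod (mmul p A B i j) \<le> (\<Sum>k<p. cmod (A i k * B k j))"
    unfolding mmul_def by (rule norm_sum)
  also have "\<dots> \<le> (\<Sum>k<p. a * b)"
    using mat_box_nonneg[OF assms(1)] assms unfolding mat_box_def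
    by (intro sum_mono) (simp add: norm_mult mult_mono)
  finally show "cmod (mmul p A B i j) \<le> p * (a * b)" by simp
qed

lemma unitaryD:
  assumes "unitary m g"
  shows "mat_in m m g" "mmul m g (madj g) = mid m" "mmul m (madj g) g = mid m"
  using assms unfolding unitary_def by auto

lemma unitary_mid: "unitary m (mid m)"
  unfolding unitary_def using mmul_mid_left[OF mat_in_mid] by (simp add: mat_in_mid)

lemma unitary_madj: "unitary m g \<Longrightarrow> unitary m (madj g)"
  unfolding unitary_def by (auto simp: mat_in_madj)

lemma unitary_mmul:
  assumes "unitary m g" "unitary m h"
  shows "unitary m (mmul m g h)"
proof -
  note g = unitaryD[OF assms(1)] and h = unitaryD[OF assms(2)]
  have "mmul m (mmul m g h) (madj (mmul m g h)) = mmul m g (mmul m (mmul m h (madj h)) (madj g))"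
    by (simp add: madj_mmul mmul_assoc)
  also have "\<dots> = mid m" using h(2) g(2) mmul_mid_left[OF mat_in_madj[OF g(1)]] by simp
  finally have "mmul m (mmul m g h) (madj (mmul m g h)) = mid m" .
  moreover have "mmul m (madj (mmul m g h)) (mmul m g h) = mmul m (madj h) (mmul m (mmul m (madj g) g) h)"
    by (simp add: madj_mmul mmul_assoc)
  ultimately show ?thesis
    using mat_in_mmul[OF g(1) h(1)] h(3) g(3) mmul_mid_left[OF h(1)] unfolding unitary_def by simp
qed

lemma unitary_row_norm:
  assumes "unitary m g" "i < m"
  shows "(\<Sum>k<m. (cmod (g i k))\<^sup>2) = 1"
proof -
  have "complex_of_real (\<Sum>k<m. (cmod (g i k))\<^sup>2) = mmul m g (madj g) i i"
    by (rule mmul_madj_diag[symmetric])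
  also have "\<dots> = 1" using unitaryD(2)[OF assms(1)] assms(2) by (simp add: mid_def)
  finally show ?thesis by (simp only: of_real_eq_1_iff)
qed

lemma unitary_col_norm:
  assumes "unitary m g" "i < m"
  shows "(\<Sum>k<m. (cmod (g k i))\<^sup>2) = 1"
proof -
  have "complex_of_real (\<Sum>k<m. (cmod (g k i))\<^sup>2) = mmul m (madj g) g i i"
    by (rule madj_mmul_diag[symmetric])
  also have "\<dots> = 1" using unitaryD(3)[OF assms(1)] assms(2) by (simp add: mid_def)
  finally show ?thesis by (simp only: of_real_eq_1_iff)
qed

lemma unitary_mat_box:
  assumes "unitary m g"
  shows "g \<in> mat_box 1"
  unfolding mat_box_def
proof (intro CollectI allI)
  fix i j
  show "cmod (g i j) \<le> 1"
  proof (cases "i < m \<and> j < m")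
    case True
    have "(cmod (g i j))\<^sup>2 \<le> (\<Sum>k<m. (cmod (g i k))\<^sup>2)"
      using True by (intro member_le_sum) auto
    then have "(cmod (g i j))\<^sup>2 \<le> 1" using unitary_row_norm[OF assms] True by simp
    then show ?thesis by (simp add: power_le_one_iff abs_le_square_iff)
  next
    case False
    then show ?thesis using unitaryD(1)[OF assms] by (auto simp: mat_in_def)
  qed
qed

definition mconj :: "nat \<Rightarrow> cmat \<Rightarrow> cmat \<Rightarrow> cmat" where
  "mconj m g A = mmul m (mmul m g A) (madj g)"

lemma unitary_mconj: "unitary m U \<Longrightarrow> unitary m g \<Longrightarrow> unitary m (mconj m U g)"
  unfolding mconj_def by (intro unitary_mmul unitary_madj)

lemma mconj_add: "mconj m g (\<lambda>i j. A i j + B i j) = (\<lambda>i j. mconj m g A i j + mconj m g B i j)"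
  by (simp add: mconj_def mmul_add_left mmul_add_right)

lemma mconj_diff: "mconj m g (\<lambda>i j. A i j - B i j) = (\<lambda>i j. mconj m g A i j - mconj m g B i j)"
  by (simp add: mconj_def mmul_diff_left mmul_diff_right)

lemma mconj_scale: "mconj m g (\<lambda>i j. c * A i j) = (\<lambda>i j. c * mconj m g A i j)"
  by (simp add: mconj_def mmul_scale_left mmul_scale_right)

lemma mconj_zero: "mconj m g (\<lambda>i j. 0) = (\<lambda>i j. 0)"
  by (simp add: mconj_def mmul_zero_left mmul_zero_right)

lemma mconj_mid: "unitary m g \<Longrightarrow> mconj m g (mid m) = mid m"
  unfolding mconj_def unitary_def using mmul_mid_right by metis

lemma madj_mconj: "madj (mconj m g A) = mconj m g (madj A)"
  by (simp add: mconj_def madj_mmul mmul_assoc)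

lemma mconj_mmul:
  assumes "unitary m g" "mat_in m m B"
  shows "mmul m (mconj m g A) (mconj m g B) = mconj m g (mmul m A B)"
proof -
  note g = unitaryD[OF assms(1)]
  have "mmul m (mconj m g A) (mconj m g B) =
      mmul m g (mmul m A (mmul m (mmul m (madj g) g) (mmul m B (madj g))))"
    by (simp add: mconj_def mmul_assoc)
  also have "\<dots> = mconj m g (mmul m A B)"
    using g(3) mmul_mid_left[OF mat_in_mmul[OF assms(2) mat_in_madj[OF g(1)]]]
    by (simp add: mconj_def mmul_assoc)
  finally show ?thesis .
qed

lemma mmul_mconj_factors: "mmul q (mmul m g A) (mmul m B (madj g)) = mconj m g (mmul q A B)"
  by (simp add: mconj_def mmul_assoc)

section \<open>Diagonalisation of unitary matrices\<close>

definition diagm :: "nat \<Rightarrow> (nat \<Rightarrow> complex) \<Rightarrow> cmat" where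
  "diagm m d = (\<lambda>i j. if i = j \<and> i < m then d i else 0)"

lemma mmul_diagm_left: "mmul m (diagm m d) A i j = (if i < m then d i * A i j else 0)"
proof -
  have "mmul m (diagm m d) A i j = (\<Sum>k<m. if k = i then d i * A i j else 0)"
    unfolding mmul_def diagm_def by (rule sum.cong) auto
  then show ?thesis by simp
qed

lemma mmul_diagm_right: "mmul m A (madj (diagm m d)) i j = (if j < m then A i j * cnj (d j) else 0)"
proof -
  have "mmul m A (madj (diagm m d)) i j = (\<Sum>k<m. if k = j then A i j * cnj (d j) else 0)"
    unfolding mmul_def diagm_def madj_def by (rule sum.cong) auto
  then show ?thesis by simp
qed

lemma eigenvector_exists:
  fixes g :: cmat
  assumes "0 < n"
  obtains v lam where "\<exists>i<n. v i \<noteq> 0" "\<forall>i. n \<le> i \<longrightarrow> v i = 0"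
    "\<forall>i<n. (\<Sum>j<n. g i j * v j) = lam * v i"
proof -
  define A :: "complex mat" where "A = mat n n (\<lambda>(i, j). g i j)"
  have A: "A \<in> carrier_mat n n" unfolding A_def by simp
  have "degree (char_poly A) = n" using degree_monic_char_poly[OF A] by simp
  then have "\<not> constant (poly (char_poly A))" using assms by (simp add: constant_degree)
  then obtain z where "poly (char_poly A) z = 0" using fundamental_theorem_of_algebra by blast
  then have "eigenvalue A z" using eigenvalue_root_char_poly[OF A] by simp
  then obtain v where "eigenvector A v z" unfolding eigenvalue_def by blast
  then have v: "v \<in> carrier_vec n" and v0: "v \<noteq> 0\<^sub>v n" and Av: "A *\<^sub>v v = z \<cdot>\<^sub>v v"
    unfolding eigenvector_def using A by auto
  define vf where "vf = (\<lambda>i. if i < n then v $ i else 0)"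
  have "\<exists>i<n. vf i \<noteq> 0"
  proof (rule ccontr)
    assume "\<not> (\<exists>i<n. vf i \<noteq> 0)"
    then have "v = 0\<^sub>v n" using v unfolding vf_def by (auto simp: vec_eq_iff)
    then show False using v0 by simp
  qed
  moreover have "(\<Sum>j<n. g i j * vf j) = z * vf i" if "i < n" for i
  proof -
    have "(\<Sum>j<n. g i j * vf j) = (A *\<^sub>v v) $ i"
      using that v unfolding A_def vf_def
      by (auto simp: scalar_prod_def atLeast0LessThan intro!: sum.cong)
    also have "\<dots> = z * vf i" using Av that v unfolding vf_def by simp
    finally show ?thesis .
  qed
  ultimately show ?thesis using that[of vf z] unfolding vf_def by auto
qed

definition vnorm2 :: "nat \<Rightarrow> (nat \<Rightarrow> complex) \<Rightarrow> real" where
  "vnorm2 m w = (\<Sum>k<m. (cmod (w k))\<^sup>2)"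

definition outer :: "(nat \<Rightarrow> complex) \<Rightarrow> cmat" where
  "outer w = (\<lambda>i j. w i * cnj (w j))"

definition householder :: "nat \<Rightarrow> (nat \<Rightarrow> complex) \<Rightarrow> cmat" where
  "householder m w = (\<lambda>i j. mid m i j - complex_of_real (2 / vnorm2 m w) * outer w i j)"

lemma vnorm2_scale: "vnorm2 m (\<lambda>i. c * v i) = (cmod c)\<^sup>2 * vnorm2 m v"
  unfolding vnorm2_def by (simp add: sum_distrib_left norm_mult power_mult_distrib)

lemma mmul_outer: "mmul m (outer w) (outer w) = (\<lambda>i j. complex_of_real (vnorm2 m w) * outer w i j)"
proof (intro ext)
  fix i j
  have "w k * cnj (w k) = complex_of_real ((cmod (w k))\<^sup>2)" for k
    by (simp add: complex_mult_cnj cmod_power2)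
  then have "mmul m (outer w) (outer w) i j = (\<Sum>k<m. complex_of_real ((cmod (w k))\<^sup>2)) * (w i * cnj (w j))"
    unfolding mmul_def outer_def sum_distrib_right by (intro sum.cong refl) (metis mult.assoc mult.commute mult.left_commute)
  then show "mmul m (outer w) (outer w) i j = complex_of_real (vnorm2 m w) * outer w i j"
    by (simp add: vnorm2_def outer_def)
qed

lemma unitary_householder:
  assumes w: "\<forall>i. m \<le> i \<longrightarrow> w i = 0" and nz: "vnorm2 m w \<noteq> 0"
  shows "unitary m (householder m w)"
proof -
  define c where "c = complex_of_real (2 / vnorm2 m w)"
  have O: "mat_in m m (outer w)" using w by (auto simp: mat_in_def outer_def)
  have H: "mat_in m m (householder m w)" using O mat_in_mid[of m] unfolding householder_def mat_in_def by auto
  have adj: "madj (householder m w) = householder m w"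
    unfolding householder_def madj_def outer_def mid_def by (auto intro!: ext)
  have He: "householder m w = (\<lambda>i j. mid m i j - c * outer w i j)" unfolding householder_def c_def ..
  have cc: "c * c * complex_of_real (vnorm2 m w) = 2 * c"
    unfolding c_def using nz by (simp add: field_simps of_real_divide)
  have "mmul m (householder m w) (householder m w) =
      (\<lambda>i j. mmul m (mid m) (householder m w) i j - c * mmul m (outer w) (householder m w) i j)"
    by (subst (1) He) (simp add: mmul_diff_left mmul_scale_left)
  also have "mmul m (outer w) (householder m w) =
      (\<lambda>i j. mmul m (outer w) (mid m) i j - c * mmul m (outer w) (outer w) i j)"
    by (subst He) (simp add: mmul_diff_right mmul_scale_right)
  also have "\<dots> = (\<lambda>i j. outer w i j - c * (complex_of_real (vnorm2 m w) * outer w i j))"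
    using mmul_mid_right[OF O] mmul_outer by simp
  also have "mmul m (mid m) (householder m w) = householder m w" using mmul_mid_left[OF H] .
  finally have "mmul m (householder m w) (householder m w) = mid m"
    unfolding He using cc by (auto intro!: ext simp: algebra_simps)
  then show ?thesis unfolding unitary_def using H adj by simp
qed

lemma householder_column:
  assumes n: "n < m" and un: "vnorm2 m u = 1" and ua: "u n = complex_of_real a" and a: "a \<noteq> 1"
  defines "w \<equiv> \<lambda>i. u i - (if i = n then 1 else 0)"
  shows "vnorm2 m w = 2 - 2 * a" "householder m w i n = u i"
proof -
  have wn: "w n = complex_of_real (a - 1)" unfolding w_def using ua by simp
  then have "cmod (w n) = \<bar>a - 1\<bar>" by (simp only: norm_of_real)
  then have "(cmod (w k))\<^sup>2 = (cmod (u k))\<^sup>2 + (if k = n then (1 - a)\<^sup>2 - a\<^sup>2 else 0)" for k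
    using ua by (cases "k = n") (simp_all add: w_def power2_commute)
  then have "vnorm2 m w = vnorm2 m u + ((1 - a)\<^sup>2 - a\<^sup>2)"
    using n unfolding vnorm2_def by (simp add: sum.distrib)
  then show nw: "vnorm2 m w = 2 - 2 * a" using un by (simp add: power2_eq_square algebra_simps)
  have "2 / vnorm2 m w * (a - 1) = -1" using nw a by (simp add: field_simps)
  then have c: "complex_of_real (2 / vnorm2 m w) * cnj (w n) = -1"
    unfolding wn by (metis complex_cnj_complex_of_real of_real_minus of_real_mult of_real_1)
  have "householder m w i n = mid m i n - complex_of_real (2 / vnorm2 m w) * cnj (w n) * w i"
    unfolding householder_def outer_def by (simp add: mult_ac)
  also have "\<dots> = u i" using c n unfolding w_def mid_def by auto
  finally show "householder m w i n = u i" .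
qed

text \<open>The reflection in the hyperplane orthogonal to \<open>u - e\<^sub>n\<close> swaps \<open>e\<^sub>n\<close> and \<open>u\<close>; this needs
  \<open>u\<^sub>n\<close> to be real.\<close>

lemma unitary_with_column:
  assumes us: "\<forall>i. s \<le> i \<longrightarrow> u i = 0" and sm: "s \<le> m" and ns: "n < s"
    and un: "vnorm2 m u = 1" and ua: "u n = complex_of_real a"
  obtains W where "unitary m W" "\<forall>i. W i n = u i" "\<forall>i j. s \<le> i \<or> s \<le> j \<longrightarrow> W i j = mid m i j"
proof (cases "a = 1")
  case True
  have "n < m" using ns sm by simp
  then have "vnorm2 m u = 1 + (\<Sum>k\<in>{..<m} - {n}. (cmod (u k))\<^sup>2)"
    unfolding vnorm2_def using ua True by (simp add: sum.remove)
  then have "\<forall>k\<in>{..<m} - {n}. (cmod (u k))\<^sup>2 = 0"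
    using un by (subst sum_nonneg_eq_0_iff[symmetric]) auto
  then have "mid m i n = u i" for i
    using us sm ns ua True by (cases "i = n"; cases "i < m") (auto simp: mid_def)
  then show ?thesis using that unitary_mid by (auto simp: mid_def)
next
  case False
  define w where "w = (\<lambda>i. u i - (if i = n then 1 else 0))"
  have ws: "\<forall>i. s \<le> i \<longrightarrow> w i = 0" using us ns unfolding w_def by auto
  note col = householder_column[OF _ un ua False, folded w_def]
  have "unitary m (householder m w)"
    using ws sm ns col(1) False by (intro unitary_householder) auto
  moreover have "\<forall>i j. s \<le> i \<or> s \<le> j \<longrightarrow> householder m w i j = mid m i j"
    using ws unfolding householder_def outer_def by auto
  ultimately show ?thesis using that col(2) ns sm by auto
qed

definition diagonal_beyond :: "nat \<Rightarrow> cmat \<Rightarrow> bool" where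
  "diagonal_beyond s g \<longleftrightarrow> (\<forall>i j. (s \<le> i \<or> s \<le> j) \<and> i \<noteq> j \<longrightarrow> g i j = 0)"

lemma diagonal_beyond_mmul:
  assumes "diagonal_beyond s A" "diagonal_beyond s B"
  shows "diagonal_beyond s (mmul m A B)"
  unfolding diagonal_beyond_def
proof (intro allI impI)
  fix i j assume ij: "(s \<le> i \<or> s \<le> j) \<and> i \<noteq> j"
  have "A i k * B k j = 0" for k
    using assms ij unfolding diagonal_beyond_def by (cases "k = i"; cases "k = j") auto
  then show "mmul m A B i j = 0" unfolding mmul_def by (intro sum.neutral) blast
qed

lemma diagonal_beyond_madj: "diagonal_beyond s A \<Longrightarrow> diagonal_beyond s (madj A)"
  unfolding diagonal_beyond_def madj_def by auto

lemma eigenvector_in_block: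
  assumes sm: "s < m" and g: "diagonal_beyond (Suc s) g"
  obtains v lam where "vnorm2 m v \<noteq> 0" "\<forall>i. Suc s \<le> i \<longrightarrow> v i = 0"
    "\<forall>l. (\<Sum>k<m. g l k * v k) = lam * v l"
proof -
  obtain v lam where v0: "\<exists>i<Suc s. v i \<noteq> 0" and vs: "\<forall>i. Suc s \<le> i \<longrightarrow> v i = 0"
    and ve: "\<forall>i<Suc s. (\<Sum>j<Suc s. g i j * v j) = lam * v i"
    using eigenvector_exists[of "Suc s" g] by auto
  obtain i where i: "i < Suc s" "v i \<noteq> 0" using v0 by auto
  then have "0 < (cmod (v i))\<^sup>2" by simp
  also have "\<dots> \<le> vnorm2 m v" unfolding vnorm2_def using i sm by (intro member_le_sum) auto
  finally have "vnorm2 m v \<noteq> 0" by simp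
  moreover have "(\<Sum>k<m. g l k * v k) = lam * v l" for l
  proof (cases "l < Suc s")
    case True
    have "(\<Sum>k<m. g l k * v k) = (\<Sum>k<Suc s. g l k * v k)"
      using vs sm by (intro sum.mono_neutral_right) auto
    then show ?thesis using ve True by simp
  next
    case False
    then have "g l k * v k = 0" for k
      using g vs unfolding diagonal_beyond_def by (cases "k = l") auto
    then have "(\<Sum>k<m. g l k * v k) = 0" by (intro sum.neutral) blast
    then show ?thesis using False vs by simp
  qed
  ultimately show ?thesis using that vs by blast
qed

lemma normalise_with_real_entry:
  assumes "vnorm2 m v \<noteq> 0"
  obtains c where "vnorm2 m (\<lambda>i. c * v i) = 1" "c * v s = complex_of_real (cmod (c * v s))"
proof -
  define ph where "ph = (if v s = 0 then 1 else cnj (v s) / complex_of_real (cmod (v s)))"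
  have "cnj (v s) * v s = complex_of_real (cmod (v s)) * complex_of_real (cmod (v s))"
    using complex_norm_square[of "v s"] by (simp add: power2_eq_square mult.commute)
  then have ph: "cmod ph = 1" "ph * v s = complex_of_real (cmod (v s))"
    unfolding ph_def by (auto simp: norm_divide)
  define c where "c = ph / complex_of_real (sqrt (vnorm2 m v))"
  have "0 < vnorm2 m v" using assms unfolding vnorm2_def by (simp add: order_le_neq_trans sum_nonneg)
  then have "vnorm2 m (\<lambda>i. c * v i) = 1" "c * v s = complex_of_real (cmod (c * v s))"
    using ph unfolding vnorm2_scale c_def by (simp_all add: norm_divide power_divide norm_mult)
  then show ?thesis using that by blast
qed

lemma unit_eigenvector_in_block:
  assumes "s < m" "diagonal_beyond (Suc s) g"
  obtains u lam where "vnorm2 m u = 1" "\<forall>i. Suc s \<le> i \<longrightarrow> u i = 0"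
    "u s = complex_of_real (cmod (u s))" "\<forall>l. (\<Sum>k<m. g l k * u k) = lam * u l"
proof -
  obtain v lam where v: "vnorm2 m v \<noteq> 0" "\<forall>i. Suc s \<le> i \<longrightarrow> v i = 0"
    "\<forall>l. (\<Sum>k<m. g l k * v k) = lam * v l"
    using eigenvector_in_block[OF assms] by blast
  obtain c where "vnorm2 m (\<lambda>i. c * v i) = 1" "c * v s = complex_of_real (cmod (c * v s))"
    using normalise_with_real_entry[OF v(1)] by blast
  moreover have "(\<Sum>k<m. g l k * (c * v k)) = lam * (c * v l)" for l
    using v(3) by (simp add: sum_distrib_left mult_ac flip: sum_distrib_left)
  ultimately show ?thesis using that[of "\<lambda>i. c * v i" lam] v(2) by simp
qed

lemma unitary_eigencolumn_row:
  assumes g: "unitary m g" and n: "n < m" and col: "\<forall>i. g i n = lam * mid m i n" and k: "k \<noteq> n"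
  shows "g n k = 0"
proof (cases "k < m")
  case True
  have "(cmod (g i n))\<^sup>2 = (if i = n then (cmod lam)\<^sup>2 else 0)" for i
    using col n by (simp add: mid_def)
  then have "(\<Sum>i<m. (cmod (g i n))\<^sup>2) = (cmod lam)\<^sup>2" using n by simp
  then have lam: "(cmod (g n n))\<^sup>2 = 1"
    using unitary_col_norm[OF g n] col n by (simp add: mid_def)
  have "(\<Sum>i<m. (cmod (g n i))\<^sup>2) = (cmod (g n n))\<^sup>2 + (\<Sum>i\<in>{..<m} - {n}. (cmod (g n i))\<^sup>2)"
    using n by (simp add: sum.remove)
  then have "(\<Sum>i\<in>{..<m} - {n}. (cmod (g n i))\<^sup>2) = 0"
    using unitary_row_norm[OF g n] lam by simp
  then show ?thesis using True k by (subst (asm) sum_nonneg_eq_0_iff) auto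
next
  case False
  then show ?thesis using unitaryD(1)[OF g] by (auto simp: mat_in_def)
qed

text \<open>A unitary change of basis taking \<open>e\<^sub>s\<close> to an eigenvector of the leading block makes
  column \<open>s\<close> diagonal, and then row \<open>s\<close> too, since rows and columns of a unitary matrix are unit
  vectors.\<close>

lemma diagonal_beyond_reduce:
  assumes gu: "unitary m g" and gb: "diagonal_beyond (Suc s) g" and sm: "s < m"
  obtains W where "unitary m W" "diagonal_beyond s (mconj m (madj W) g)"
proof -
  obtain u lam where un: "vnorm2 m u = 1" and us: "\<forall>i. Suc s \<le> i \<longrightarrow> u i = 0"
    and ua: "u s = complex_of_real (cmod (u s))" and ue: "\<forall>l. (\<Sum>k<m. g l k * u k) = lam * u l"
    using unit_eigenvector_in_block[OF sm gb] by blast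
  obtain W where W: "unitary m W" and Wcol: "\<forall>i. W i s = u i"
    and Wid: "\<forall>i j. Suc s \<le> i \<or> Suc s \<le> j \<longrightarrow> W i j = mid m i j"
    using unitary_with_column[OF us _ _ un ua] sm by auto
  define g1 where "g1 = mconj m (madj W) g"
  have g1u: "unitary m g1" unfolding g1_def by (intro unitary_mconj unitary_madj W gu)
  have "diagonal_beyond (Suc s) W" using Wid unfolding diagonal_beyond_def mid_def by auto
  then have g1b: "diagonal_beyond (Suc s) g1"
    unfolding g1_def mconj_def by (intro diagonal_beyond_mmul diagonal_beyond_madj gb) auto
  have col: "g1 i s = lam * mid m i s" for i
  proof -
    have gW: "mmul m g W k s = lam * W k s" for k
      using ue Wcol unfolding mmul_def by simp
    have "g1 i s = mmul m (madj W) (mmul m g W) i s" unfolding g1_def mconj_def by (simp add: mmul_assoc)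
    also have "\<dots> = lam * mmul m (madj W) W i s"
      unfolding mmul_apply[of m "madj W"] gW by (simp add: sum_distrib_left mult_ac)
    finally show ?thesis using unitaryD(3)[OF W] by simp
  qed
  have "diagonal_beyond s g1"
    unfolding diagonal_beyond_def
  proof (intro allI impI)
    fix i j assume ij: "(s \<le> i \<or> s \<le> j) \<and> i \<noteq> j"
    show "g1 i j = 0"
    proof (cases "Suc s \<le> i \<or> Suc s \<le> j")
      case True then show ?thesis using g1b ij unfolding diagonal_beyond_def by auto
    next
      case False
      then have "i = s \<or> j = s" using ij by auto
      then show ?thesis
        using unitary_eigencolumn_row[OF g1u sm, of lam j] col ij by (auto simp: mid_def)
    qed
  qed
  then show ?thesis using that W unfolding g1_def by blast
qed

lemma diagonal_beyond_0_diagm: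
  assumes gu: "unitary m g" and gb: "diagonal_beyond 0 g"
  shows "g = diagm m (\<lambda>i. g i i)" "\<forall>i<m. cmod (g i i) = 1"
proof -
  have off: "g i k = 0" if "k \<noteq> i" for i k
    using gb that unfolding diagonal_beyond_def by auto
  have "g i j = 0" if "\<not> (i = j \<and> i < m)" for i j
    using that off[of j i] unitaryD(1)[OF gu] by (cases "i = j") (simp_all add: mat_in_def)
  then show "g = diagm m (\<lambda>i. g i i)" unfolding diagm_def by (intro ext) auto
  show "\<forall>i<m. cmod (g i i) = 1"
  proof (intro allI impI)
    fix i assume i: "i < m"
    have "(\<Sum>k<m. (cmod (g i k))\<^sup>2) = (\<Sum>k<m. if k = i then (cmod (g i i))\<^sup>2 else 0)"
      using off[of _ i] by (intro sum.cong) auto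
    also have "\<dots> = (cmod (g i i))\<^sup>2" using i by simp
    finally show "cmod (g i i) = 1"
      using unitary_row_norm[OF gu i] norm_ge_zero[of "g i i"] by (simp add: power2_eq_1_iff)
  qed
qed

lemma unitary_diagonalization_beyond:
  "s \<le> m \<Longrightarrow> unitary m g \<Longrightarrow> diagonal_beyond s g \<Longrightarrow>
   \<exists>U d. unitary m U \<and> (\<forall>i<m. cmod (d i) = 1) \<and> mconj m (madj U) g = diagm m d"
proof (induction s arbitrary: g)
  case 0
  have "mconj m (madj (mid m)) g = g"
    using mmul_mid_left mmul_mid_right unitaryD(1)[OF "0.prems"(2)] by (simp add: mconj_def)
  then show ?case using diagonal_beyond_0_diagm[OF "0.prems"(2,3)] unitary_mid by metis
next
  case (Suc s)
  obtain W where W: "unitary m W" and g1: "diagonal_beyond s (mconj m (madj W) g)"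
    using diagonal_beyond_reduce[OF Suc.prems(2,3)] Suc.prems(1) by auto
  have "unitary m (mconj m (madj W) g)" by (intro unitary_mconj unitary_madj W Suc.prems(2))
  then obtain U d where U: "unitary m U" "\<forall>i<m. cmod (d i) = 1"
    and Ud: "mconj m (madj U) (mconj m (madj W) g) = diagm m d"
    using Suc.IH[OF _ _ g1] Suc.prems(1) by auto
  have "mconj m (madj (mmul m W U)) g = mconj m (madj U) (mconj m (madj W) g)"
    by (simp add: mconj_def madj_mmul mmul_assoc)
  then show ?case using Ud U unitary_mmul[OF W U(1)] by metis
qed

lemma unitary_diagonalization:
  assumes "unitary m g"
  obtains U d where "unitary m U" "\<forall>i<m. cmod (d i) = 1" "mconj m (madj U) g = diagm m d"
proof -
  have "diagonal_beyond m g"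
    using unitaryD(1)[OF assms] unfolding mat_in_def diagonal_beyond_def by auto
  then show ?thesis using unitary_diagonalization_beyond[OF le_refl assms] that by blast
qed

section \<open>The gauge action on the level set\<close>

definition mu_C :: "nat \<Rightarrow> nat \<Rightarrow> cmat \<Rightarrow> cmat \<Rightarrow> cmat \<Rightarrow> cmat \<Rightarrow> cmat" where
  "mu_C m n X Y I J = (\<lambda>i j. mmul m X Y i j - mmul m Y X i j + mmul n I J i j)"

definition mu_R :: "nat \<Rightarrow> nat \<Rightarrow> cmat \<Rightarrow> cmat \<Rightarrow> cmat \<Rightarrow> cmat \<Rightarrow> cmat" where
  "mu_R m n X Y I J = (\<lambda>i j. (mmul m X (madj X) i j - mmul m (madj X) X i j)
     + (mmul m Y (madj Y) i j - mmul m (madj Y) Y i j) + mmul n I (madj I) i j - mmul n (madj J) J i j)"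

definition shaped :: "nat \<Rightarrow> nat \<Rightarrow> nat \<Rightarrow> nat \<Rightarrow> qdata \<Rightarrow> bool" where
  "shaped N K M1 M2 = (\<lambda>(X, Y, I, J, X', Y', I', J', S).
     mat_in M1 M1 X \<and> mat_in M1 M1 Y \<and> mat_in M1 N I \<and> mat_in N M1 J \<and>
     mat_in M2 M2 X' \<and> mat_in M2 M2 Y' \<and> mat_in M2 K I' \<and> mat_in K M2 J' \<and> mat_in M2 M1 S)"

lemma level_set_iff:
  "(X, Y, I, J, X', Y', I', J', S) \<in> level_set N K M1 M2 \<xi> \<longleftrightarrow>
     shaped N K M1 M2 (X, Y, I, J, X', Y', I', J', S) \<and>
     mu_C M1 N X Y I J = (\<lambda>i j. 0) \<and> mu_C M2 K X' Y' I' J' = (\<lambda>i j. 0) \<and>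
     (\<lambda>i j. mu_R M1 N X Y I J i j - mmul M2 (madj S) S i j) = (\<lambda>i j. complex_of_real \<xi> * mid M1 i j) \<and>
     (\<lambda>i j. mu_R M2 K X' Y' I' J' i j + mmul M1 S (madj S) i j) = (\<lambda>i j. complex_of_real \<xi> * mid M2 i j)"
  by (simp add: level_set_def shaped_def mu_C_def mu_R_def fun_eq_iff)

lemma mu_C_mconj:
  assumes "unitary m g" "mat_in m m X" "mat_in m m Y"
  shows "mu_C m n (mconj m g X) (mconj m g Y) (mmul m g I) (mmul m J (madj g)) = mconj m g (mu_C m n X Y I J)"
  using assms by (simp add: mu_C_def mconj_add mconj_diff mconj_mmul mmul_mconj_factors)

lemma mu_R_mconj:
  assumes "unitary m g" "mat_in m m X" "mat_in m m Y"
  shows "mu_R m n (mconj m g X) (mconj m g Y) (mmul m g I) (mmul m J (madj g)) = mconj m g (mu_R m n X Y I J)"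
  using assms
  by (simp add: mu_R_def mconj_add mconj_diff mconj_mmul madj_mconj mat_in_madj madj_mmul mmul_mconj_factors)

lemma unitary_cancel_left:
  assumes "unitary q h" "mat_in q n B"
  shows "mmul q (madj h) (mmul q h B) = B"
  using unitaryD(3)[OF assms(1)] mmul_mid_left[OF assms(2)] by (simp add: mmul_assoc[symmetric])

lemma gauge_act_level_set:
  assumes x: "x \<in> level_set N K M1 M2 \<xi>" and g: "unitary M1 g" and h: "unitary M2 h"
  shows "gauge_act N K M1 M2 g h x \<in> level_set N K M1 M2 \<xi>"
proof -
  obtain X Y I J X' Y' I' J' S where xe: "x = (X, Y, I, J, X', Y', I', J', S)"
    by (cases x) auto
  define S1 where "S1 = mmul M1 (mmul M2 h S) (madj g)"
  have ge: "gauge_act N K M1 M2 g h x = (mconj M1 g X, mconj M1 g Y, mmul M1 g I, mmul M1 J (madj g),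
      mconj M2 h X', mconj M2 h Y', mmul M2 h I', mmul M2 J' (madj h), S1)"
    by (simp add: xe gauge_act_def mconj_def S1_def)
  have L: "shaped N K M1 M2 x" "mu_C M1 N X Y I J = (\<lambda>i j. 0)" "mu_C M2 K X' Y' I' J' = (\<lambda>i j. 0)"
    "(\<lambda>i j. mu_R M1 N X Y I J i j - mmul M2 (madj S) S i j) = (\<lambda>i j. complex_of_real \<xi> * mid M1 i j)"
    "(\<lambda>i j. mu_R M2 K X' Y' I' J' i j + mmul M1 S (madj S) i j) = (\<lambda>i j. complex_of_real \<xi> * mid M2 i j)"
    using x unfolding xe level_set_iff by auto
  have dims: "mat_in M1 M1 X" "mat_in M1 M1 Y" "mat_in M1 N I" "mat_in N M1 J"
    "mat_in M2 M2 X'" "mat_in M2 M2 Y'" "mat_in M2 K I'" "mat_in K M2 J'" "mat_in M2 M1 S"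
    using L(1) unfolding xe shaped_def by auto
  note gm = unitaryD(1)[OF g] and hm = unitaryD(1)[OF h]
  have S1: "mmul M2 (madj S1) S1 = mconj M1 g (mmul M2 (madj S) S)"
    "mmul M1 S1 (madj S1) = mconj M2 h (mmul M1 S (madj S))"
    using unitary_cancel_left[OF h mat_in_mmul[OF dims(9) mat_in_madj[OF gm]]]
      unitary_cancel_left[OF g mat_in_mmul[OF mat_in_madj[OF dims(9)] mat_in_madj[OF hm]]]
    by (simp_all add: S1_def mconj_def madj_mmul mmul_assoc)
  have "shaped N K M1 M2 (gauge_act N K M1 M2 g h x)"
    unfolding ge shaped_def mconj_def S1_def
    using dims gm hm by (auto intro!: mat_in_mmul intro: mat_in_madj)
  then show ?thesis
    unfolding ge level_set_iff
    using L(2-5)[THEN arg_cong[where f = "mconj M1 g"]] L(2-5)[THEN arg_cong[where f = "mconj M2 h"]]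
    by (simp add: mu_C_mconj mu_R_mconj g h dims S1 mconj_zero mconj_diff mconj_add mconj_scale mconj_mid)
qed

lemma gauge_act_comp:
  "gauge_act N K M1 M2 g h (gauge_act N K M1 M2 g' h' x) =
   gauge_act N K M1 M2 (mmul M1 g g') (mmul M2 h h') x"
  by (simp add: gauge_act_def mmul_assoc madj_mmul split: prod.splits)

lemma gauge_act_mid:
  assumes "shaped N K M1 M2 x"
  shows "gauge_act N K M1 M2 (mid M1) (mid M2) x = x"
  using assms
  by (simp add: shaped_def gauge_act_def split: prod.splits,
      simp add: mmul_mid_left[of M1 M1] mmul_mid_left[of M1 N] mmul_mid_left[of M2 M2] mmul_mid_left[of M2 K]
        mmul_mid_left[of M2 M1] mmul_mid_right[of M1 M1] mmul_mid_right[of N M1] mmul_mid_right[of M2 M2]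
        mmul_mid_right[of K M2] mmul_mid_right[of M2 M1])

lemma gauge_act_inverse:
  assumes "shaped N K M1 M2 x" "unitary M1 g" "unitary M2 h"
  shows "gauge_act N K M1 M2 (madj g) (madj h) (gauge_act N K M1 M2 g h x) = x"
    "gauge_act N K M1 M2 g h (gauge_act N K M1 M2 (madj g) (madj h) x) = x"
  using gauge_act_mid[OF assms(1)] unitaryD[OF assms(2)] unitaryD[OF assms(3)]
  by (simp_all add: gauge_act_comp)

lemma shaped_torus_act: "shaped N K M1 M2 x \<Longrightarrow> shaped N K M1 M2 (torus_act r1 r2 s1 s2 t x)"
  by (simp add: shaped_def torus_act_def mat_in_msc split: prod.splits)

lemma torus_act_gauge_act:
  "torus_act r1 r2 s1 s2 t (gauge_act N K M1 M2 g h x) = gauge_act N K M1 M2 g h (torus_act r1 r2 s1 s2 t x)"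
  by (simp add: gauge_act_def torus_act_def mmul_msc_left mmul_msc_right split: prod.splits)

lemma level_set_shaped:
  assumes "x \<in> level_set N K M1 M2 \<xi>"
  shows "shaped N K M1 M2 x"
proof -
  obtain X Y I J X' Y' I' J' S where "x = (X, Y, I, J, X', Y', I', J', S)"
    by (cases x) auto
  then show ?thesis using assms level_set_iff by simp
qed

lemma mem_gauge_orbit:
  "y \<in> gauge_orbit N K M1 M2 x \<longleftrightarrow> (\<exists>g h. unitary M1 g \<and> unitary M2 h \<and> gauge_act N K M1 M2 g h x = y)"
  unfolding gauge_orbit_def by auto

lemma gauge_orbit_refl: "shaped N K M1 M2 x \<Longrightarrow> x \<in> gauge_orbit N K M1 M2 x"
  unfolding mem_gauge_orbit using gauge_act_mid unitary_mid by blast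

lemma gauge_orbit_eq:
  assumes x: "shaped N K M1 M2 x" and y: "y \<in> gauge_orbit N K M1 M2 x"
  shows "gauge_orbit N K M1 M2 y = gauge_orbit N K M1 M2 x"
proof
  obtain g h where g: "unitary M1 g" and h: "unitary M2 h" and ye: "y = gauge_act N K M1 M2 g h x"
    using y unfolding mem_gauge_orbit by blast
  show "gauge_orbit N K M1 M2 y \<subseteq> gauge_orbit N K M1 M2 x"
    unfolding gauge_orbit_def ye gauge_act_comp using unitary_mmul g h by blast
  show "gauge_orbit N K M1 M2 x \<subseteq> gauge_orbit N K M1 M2 y"
  proof
    fix z assume "z \<in> gauge_orbit N K M1 M2 x"
    then obtain g' h' where g': "unitary M1 g'" and h': "unitary M2 h'"
      and ze: "z = gauge_act N K M1 M2 g' h' x"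
      unfolding mem_gauge_orbit by blast
    have "z = gauge_act N K M1 M2 (mmul M1 g' (madj g)) (mmul M2 h' (madj h)) y"
      unfolding ze ye gauge_act_comp[symmetric] gauge_act_inverse(1)[OF x g h] ..
    then show "z \<in> gauge_orbit N K M1 M2 y"
      unfolding mem_gauge_orbit using unitary_mmul unitary_madj g h g' h' by blast
  qed
qed

lemma gauge_orbit_subset_level_set:
  "x \<in> level_set N K M1 M2 \<xi> \<Longrightarrow> gauge_orbit N K M1 M2 x \<subseteq> level_set N K M1 M2 \<xi>"
  unfolding gauge_orbit_def using gauge_act_level_set by blast

lemma torus_act_gauge_orbit:
  "torus_act r1 r2 s1 s2 t ` gauge_orbit N K M1 M2 x = gauge_orbit N K M1 M2 (torus_act r1 r2 s1 s2 t x)"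
  unfolding gauge_orbit_def torus_act_gauge_act[symmetric] by blast

lemma torus_fixes_gauge_orbit_iff:
  assumes "shaped N K M1 M2 x"
  shows "torus_act r1 r2 s1 s2 t ` gauge_orbit N K M1 M2 x = gauge_orbit N K M1 M2 x \<longleftrightarrow>
    torus_act r1 r2 s1 s2 t x \<in> gauge_orbit N K M1 M2 x"
  unfolding torus_act_gauge_orbit
  using gauge_orbit_refl[OF shaped_torus_act[OF assms]] gauge_orbit_eq[OF assms] by metis

lemma moduli_pairwise_disjnt: "pairwise disjnt (moduli N K M1 M2 \<xi>)"
proof (intro pairwiseI)
  fix A B assume A: "A \<in> moduli N K M1 M2 \<xi>" and B: "B \<in> moduli N K M1 M2 \<xi>" and "A \<noteq> B"
  obtain a b where a: "a \<in> level_set N K M1 M2 \<xi>" "A = gauge_orbit N K M1 M2 a"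
    and b: "b \<in> level_set N K M1 M2 \<xi>" "B = gauge_orbit N K M1 M2 b"
    using A B unfolding moduli_def by auto
  have "gauge_orbit N K M1 M2 z = A" "gauge_orbit N K M1 M2 z = B" if "z \<in> A" "z \<in> B" for z
    using that gauge_orbit_eq[OF level_set_shaped[OF a(1)], of z] gauge_orbit_eq[OF level_set_shaped[OF b(1)], of z]
    a(2) b(2) by simp_all
  then show "disjnt A B" using \<open>A \<noteq> B\<close> unfolding disjnt_def by auto
qed

lemma Union_moduli: "\<Union>(moduli N K M1 M2 \<xi>) = level_set N K M1 M2 \<xi>"
proof
  show "\<Union>(moduli N K M1 M2 \<xi>) \<subseteq> level_set N K M1 M2 \<xi>"
    unfolding moduli_def using gauge_orbit_subset_level_set by blast
  show "level_set N K M1 M2 \<xi> \<subseteq> \<Union>(moduli N K M1 M2 \<xi>)"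
  proof
    fix x assume x: "x \<in> level_set N K M1 M2 \<xi>"
    then have "gauge_orbit N K M1 M2 x \<in> moduli N K M1 M2 \<xi>" unfolding moduli_def by (rule imageI)
    then show "x \<in> \<Union>(moduli N K M1 M2 \<xi>)" using gauge_orbit_refl[OF level_set_shaped[OF x]] by blast
  qed
qed

section \<open>The quotient topology\<close>

lemma Union_Int_partition:
  assumes "pairwise disjnt P" "S \<subseteq> P" "T \<subseteq> P"
  shows "\<Union>(S \<inter> T) = \<Union>S \<inter> \<Union>T"
proof
  show "\<Union>S \<inter> \<Union>T \<subseteq> \<Union>(S \<inter> T)"
  proof
    fix z assume "z \<in> \<Union>S \<inter> \<Union>T"
    then obtain A B where "A \<in> S" "B \<in> T" "z \<in> A" "z \<in> B" by blast
    moreover from this have "A = B"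
      using assms unfolding pairwise_def disjnt_def by blast
    ultimately show "z \<in> \<Union>(S \<inter> T)" by blast
  qed
qed blast

lemma istopology_partition:
  assumes "pairwise disjnt P"
  shows "istopology (\<lambda>U. U \<subseteq> P \<and> openin T (\<Union>U))"
  unfolding istopology_def
proof (rule conjI; intro allI impI)
  fix S S' assume "S \<subseteq> P \<and> openin T (\<Union>S)" "S' \<subseteq> P \<and> openin T (\<Union>S')"
  then show "S \<inter> S' \<subseteq> P \<and> openin T (\<Union>(S \<inter> S'))"
    using Union_Int_partition[OF assms] by auto
next
  fix KK assume KK: "\<forall>S\<in>KK. S \<subseteq> P \<and> openin T (\<Union>S)"
  have "openin T (\<Union>((\<lambda>S. \<Union>S) ` KK))" using KK by (intro openin_Union) auto
  moreover have "\<Union>(\<Union>KK) = \<Union>((\<lambda>S. \<Union>S) ` KK)" by auto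
  ultimately show "\<Union>KK \<subseteq> P \<and> openin T (\<Union>(\<Union>KK))" using KK by auto
qed

lemma openin_moduli_top:
  "openin (moduli_top N K M1 M2 \<xi>) U \<longleftrightarrow>
     U \<subseteq> moduli N K M1 M2 \<xi> \<and> openin (top_of_set (level_set N K M1 M2 \<xi>)) (\<Union>U)"
  unfolding moduli_top_def by (simp add: istopology_partition[OF moduli_pairwise_disjnt])

lemma topspace_moduli_top: "topspace (moduli_top N K M1 M2 \<xi>) = moduli N K M1 M2 \<xi>"
proof -
  have "openin (moduli_top N K M1 M2 \<xi>) (moduli N K M1 M2 \<xi>)"
    unfolding openin_moduli_top Union_moduli by simp
  then have "moduli N K M1 M2 \<xi> \<subseteq> topspace (moduli_top N K M1 M2 \<xi>)"
    by (rule openin_subset)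
  moreover have "topspace (moduli_top N K M1 M2 \<xi>) \<subseteq> moduli N K M1 M2 \<xi>"
    using openin_topspace[of "moduli_top N K M1 M2 \<xi>"] unfolding openin_moduli_top by (rule conjunct1)
  ultimately show ?thesis by blast
qed

lemma continuous_map_gauge_orbit:
  "continuous_map (top_of_set (level_set N K M1 M2 \<xi>)) (moduli_top N K M1 M2 \<xi>) (gauge_orbit N K M1 M2)"
  unfolding continuous_map_openin_preimage_eq topspace_moduli_top
proof (intro conjI allI impI)
  show "gauge_orbit N K M1 M2 \<in> topspace (top_of_set (level_set N K M1 M2 \<xi>)) \<rightarrow> moduli N K M1 M2 \<xi>"
    by (auto simp: moduli_def)
  fix U assume "openin (moduli_top N K M1 M2 \<xi>) U"
  then have U: "U \<subseteq> moduli N K M1 M2 \<xi>" "openin (top_of_set (level_set N K M1 M2 \<xi>)) (\<Union>U)"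
    unfolding openin_moduli_top by auto
  have "level_set N K M1 M2 \<xi> \<inter> gauge_orbit N K M1 M2 -` U = \<Union>U"
  proof
    show "level_set N K M1 M2 \<xi> \<inter> gauge_orbit N K M1 M2 -` U \<subseteq> \<Union>U"
      using gauge_orbit_refl[OF level_set_shaped] by blast
    show "\<Union>U \<subseteq> level_set N K M1 M2 \<xi> \<inter> gauge_orbit N K M1 M2 -` U"
    proof
      fix z assume "z \<in> \<Union>U"
      then obtain a where A: "gauge_orbit N K M1 M2 a \<in> U" "z \<in> gauge_orbit N K M1 M2 a"
        and a: "a \<in> level_set N K M1 M2 \<xi>"
        using U(1) unfolding moduli_def by auto
      then show "z \<in> level_set N K M1 M2 \<xi> \<inter> gauge_orbit N K M1 M2 -` U"
        using gauge_orbit_eq[OF level_set_shaped[OF a]] gauge_orbit_subset_level_set[OF a] by auto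
    qed
  qed
  then show "openin (top_of_set (level_set N K M1 M2 \<xi>))
      (topspace (top_of_set (level_set N K M1 M2 \<xi>)) \<inter> gauge_orbit N K M1 M2 -` U)"
    using U(2) by simp
qed

definition fixed_level_set :: "nat \<Rightarrow> nat \<Rightarrow> nat \<Rightarrow> nat \<Rightarrow> real \<Rightarrow> qdata set" where
  "fixed_level_set N K M1 M2 \<xi> = {x \<in> level_set N K M1 M2 \<xi>. \<forall>r1 r2 s1 s2 t.
       norm r1 = 1 \<and> norm r2 = 1 \<and> norm s1 = 1 \<and> norm s2 = 1 \<and> norm t = 1 \<longrightarrow>
       torus_act r1 r2 s1 s2 t x \<in> gauge_orbit N K M1 M2 x}"

lemma fixed_locus_eq_image:
  "{Q \<in> moduli N K M1 M2 \<xi>. \<forall>r1 r2 s1 s2 t.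
      norm r1 = 1 \<and> norm r2 = 1 \<and> norm s1 = 1 \<and> norm s2 = 1 \<and> norm t = 1 \<longrightarrow>
      torus_act r1 r2 s1 s2 t ` Q = Q} = gauge_orbit N K M1 M2 ` fixed_level_set N K M1 M2 \<xi>"
  (is "?L = ?R")
proof
  show "?L \<subseteq> ?R"
  proof
    fix Q assume "Q \<in> ?L"
    then obtain x where x: "x \<in> level_set N K M1 M2 \<xi>" "Q = gauge_orbit N K M1 M2 x"
      unfolding moduli_def by auto
    then have "x \<in> fixed_level_set N K M1 M2 \<xi>"
      using \<open>Q \<in> ?L\<close> torus_fixes_gauge_orbit_iff[OF level_set_shaped[OF x(1)]]
      unfolding fixed_level_set_def by auto
    then show "Q \<in> ?R" using x by blast
  qed
  show "?R \<subseteq> ?L"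
  proof
    fix Q assume "Q \<in> ?R"
    then obtain x where x: "x \<in> fixed_level_set N K M1 M2 \<xi>" "Q = gauge_orbit N K M1 M2 x" by blast
    then have xl: "x \<in> level_set N K M1 M2 \<xi>" unfolding fixed_level_set_def by blast
    show "Q \<in> ?L"
      using x xl torus_fixes_gauge_orbit_iff[OF level_set_shaped[OF xl]]
      unfolding fixed_level_set_def moduli_def by auto
  qed
qed

lemma compactin_fixed_locus:
  assumes "compact (fixed_level_set N K M1 M2 \<xi>)"
  shows "compactin (moduli_top N K M1 M2 \<xi>)
           {Q \<in> moduli N K M1 M2 \<xi>. \<forall>r1 r2 s1 s2 t.
              norm r1 = 1 \<and> norm r2 = 1 \<and> norm s1 = 1 \<and> norm s2 = 1 \<and> norm t = 1 \<longrightarrow>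
              torus_act r1 r2 s1 s2 t ` Q = Q}"
proof -
  have "compactin (top_of_set (level_set N K M1 M2 \<xi>)) (fixed_level_set N K M1 M2 \<xi>)"
    using assms by (auto simp: compactin_subtopology fixed_level_set_def)
  from image_compactin[OF this continuous_map_gauge_orbit] show ?thesis
    unfolding fixed_locus_eq_image .
qed

section \<open>Closedness of the fixed part of the level set\<close>

definition qX :: "qdata \<Rightarrow> cmat" where "qX x = fst x"
definition qY :: "qdata \<Rightarrow> cmat" where "qY x = fst (snd x)"
definition qI :: "qdata \<Rightarrow> cmat" where "qI x = fst (snd (snd x))"
definition qJ :: "qdata \<Rightarrow> cmat" where "qJ x = fst (snd (snd (snd x)))"
definition qX' :: "qdata \<Rightarrow> cmat" where "qX' x = fst (snd (snd (snd (snd x))))"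
definition qY' :: "qdata \<Rightarrow> cmat" where "qY' x = fst (snd (snd (snd (snd (snd x)))))"
definition qI' :: "qdata \<Rightarrow> cmat" where "qI' x = fst (snd (snd (snd (snd (snd (snd x))))))"
definition qJ' :: "qdata \<Rightarrow> cmat" where "qJ' x = fst (snd (snd (snd (snd (snd (snd (snd x)))))))"
definition qS :: "qdata \<Rightarrow> cmat" where "qS x = snd (snd (snd (snd (snd (snd (snd (snd x)))))))"

lemmas q_defs = qX_def qY_def qI_def qJ_def qX'_def qY'_def qI'_def qJ'_def qS_def

lemma qdata_components: "x = (qX x, qY x, qI x, qJ x, qX' x, qY' x, qI' x, qJ' x, qS x)"
  by (simp add: q_defs)

lemma continuous_on_entry: "continuous_on S F \<Longrightarrow> continuous_on S (\<lambda>x. (F x :: cmat) i j)"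
  by (rule continuous_on_product_then_coordinatewise[OF continuous_on_product_then_coordinatewise])

lemma continuous_on_component_entry [continuous_intros]:
  assumes "continuous_on S f"
  shows "continuous_on S (\<lambda>x. qX (f x) i j)" "continuous_on S (\<lambda>x. qY (f x) i j)"
    "continuous_on S (\<lambda>x. qI (f x) i j)" "continuous_on S (\<lambda>x. qJ (f x) i j)"
    "continuous_on S (\<lambda>x. qX' (f x) i j)" "continuous_on S (\<lambda>x. qY' (f x) i j)"
    "continuous_on S (\<lambda>x. qI' (f x) i j)" "continuous_on S (\<lambda>x. qJ' (f x) i j)"
    "continuous_on S (\<lambda>x. qS (f x) i j)"
  unfolding q_defs by (intro continuous_on_entry continuous_intros assms)+

lemma continuous_on_pair_entry [continuous_intros]:
  "continuous_on A (\<lambda>x::cmat \<times> 'b::topological_space. fst x i j)"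
  "continuous_on B (\<lambda>x::'a::topological_space \<times> cmat. snd x i j)"
  "continuous_on C (\<lambda>x::(cmat \<times> 'b::topological_space) \<times> 'c::topological_space. fst (fst x) i j)"
  "continuous_on D (\<lambda>x::('b::topological_space \<times> cmat) \<times> 'c::topological_space. snd (fst x) i j)"
  by (intro continuous_on_entry continuous_intros)+

lemma continuous_on_mmul_entry [continuous_intros]:
  assumes "\<And>i j. continuous_on S (\<lambda>x. F x i j)" "\<And>i j. continuous_on S (\<lambda>x. G x i j)"
  shows "continuous_on S (\<lambda>x. mmul p (F x) (G x) i j)"
  unfolding mmul_def by (intro continuous_intros assms)

lemma continuous_on_madj_entry [continuous_intros]:
  assumes "\<And>i j. continuous_on S (\<lambda>x. F x i j)"
  shows "continuous_on S (\<lambda>x. madj (F x) i j)"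
  unfolding madj_def by (intro continuous_intros assms)

lemma continuous_on_msc_entry [continuous_intros]:
  assumes "\<And>i j. continuous_on S (\<lambda>x. F x i j)"
  shows "continuous_on S (\<lambda>x. msc c (F x) i j)"
  unfolding msc_def by (intro continuous_intros assms)

lemma continuous_on_const_entry [continuous_intros]: "continuous_on S (\<lambda>x. (A :: cmat) i j)"
  by (rule continuous_on_const)

lemma closed_Collect_mat_eq:
  assumes "\<And>i j. continuous_on UNIV (\<lambda>x. F x i j)" "\<And>i j. continuous_on UNIV (\<lambda>x. G x i j)"
  shows "closed {x. (F x :: cmat) = G x}"
  using assms by (intro closed_Collect_eq continuous_on_coordinatewise_then_product)

lemma closed_Collect_mat_in:
  assumes "\<And>i j. continuous_on UNIV (\<lambda>x. F x i j)"
  shows "closed {x. mat_in m n (F x)}"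
  unfolding mat_in_def by (intro closed_Collect_all closed_Collect_imp open_Collect_const closed_Collect_eq
      continuous_intros assms)

lemma closed_Collect_unitary:
  assumes "\<And>i j. continuous_on UNIV (\<lambda>x. F x i j)"
  shows "closed {x. unitary m (F x)}"
  unfolding unitary_def
  by (intro closed_Collect_conj closed_Collect_mat_in closed_Collect_mat_eq continuous_intros assms)

lemma level_set_components: "level_set N K M1 M2 \<xi> = {x.
     mat_in M1 M1 (qX x) \<and> mat_in M1 M1 (qY x) \<and> mat_in M1 N (qI x) \<and> mat_in N M1 (qJ x) \<and>
     mat_in M2 M2 (qX' x) \<and> mat_in M2 M2 (qY' x) \<and> mat_in M2 K (qI' x) \<and> mat_in K M2 (qJ' x) \<and>
     mat_in M2 M1 (qS x) \<and>
     mu_C M1 N (qX x) (qY x) (qI x) (qJ x) = (\<lambda>i j. 0) \<and> mu_C M2 K (qX' x) (qY' x) (qI' x) (qJ' x) = (\<lambda>i j. 0) \<and>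
     (\<lambda>i j. mu_R M1 N (qX x) (qY x) (qI x) (qJ x) i j - mmul M2 (madj (qS x)) (qS x) i j)
       = (\<lambda>i j. complex_of_real \<xi> * mid M1 i j) \<and>
     (\<lambda>i j. mu_R M2 K (qX' x) (qY' x) (qI' x) (qJ' x) i j + mmul M1 (qS x) (madj (qS x)) i j)
       = (\<lambda>i j. complex_of_real \<xi> * mid M2 i j)}"
  (is "_ = ?R")
proof (rule Set.set_eqI)
  fix x :: qdata
  obtain X Y I J X' Y' I' J' S where "x = (X, Y, I, J, X', Y', I', J', S)"
    by (cases x) auto
  then show "x \<in> level_set N K M1 M2 \<xi> \<longleftrightarrow> x \<in> ?R"
    by (simp add: level_set_iff shaped_def q_defs)
qed

lemma continuous_on_mu_C_entry [continuous_intros]: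
  assumes "\<And>i j. continuous_on S (\<lambda>x. X x i j)" "\<And>i j. continuous_on S (\<lambda>x. Y x i j)"
    "\<And>i j. continuous_on S (\<lambda>x. I x i j)" "\<And>i j. continuous_on S (\<lambda>x. J x i j)"
  shows "continuous_on S (\<lambda>x. mu_C m n (X x) (Y x) (I x) (J x) i j)"
  unfolding mu_C_def by (intro continuous_intros assms)

lemma continuous_on_mu_R_entry [continuous_intros]:
  assumes "\<And>i j. continuous_on S (\<lambda>x. X x i j)" "\<And>i j. continuous_on S (\<lambda>x. Y x i j)"
    "\<And>i j. continuous_on S (\<lambda>x. I x i j)" "\<And>i j. continuous_on S (\<lambda>x. J x i j)"
  shows "continuous_on S (\<lambda>x. mu_R m n (X x) (Y x) (I x) (J x) i j)"
  unfolding mu_R_def by (intro continuous_intros assms)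

lemma closed_level_set: "closed (level_set N K M1 M2 \<xi>)"
  unfolding level_set_components
  by (intro closed_Collect_conj closed_Collect_mat_in closed_Collect_mat_eq continuous_intros)

lemma gauge_act_components: "gauge_act N K M1 M2 g h x =
     (mmul M1 (mmul M1 g (qX x)) (madj g), mmul M1 (mmul M1 g (qY x)) (madj g),
      mmul M1 g (qI x), mmul M1 (qJ x) (madj g),
      mmul M2 (mmul M2 h (qX' x)) (madj h), mmul M2 (mmul M2 h (qY' x)) (madj h),
      mmul M2 h (qI' x), mmul M2 (qJ' x) (madj h), mmul M1 (mmul M2 h (qS x)) (madj g))"
  by (subst qdata_components) (simp add: gauge_act_def)

lemma torus_act_components: "torus_act r1 r2 s1 s2 t x =
     (msc r1 (qX x), msc r2 (qY x), qI x, msc (r1 * r2) (qJ x), msc s1 (qX' x), msc s2 (qY' x), qI' x,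
      msc (s1 * s2) (qJ' x), msc t (qS x))"
  by (subst qdata_components) (simp add: torus_act_def)

definition qdata_box :: "real \<Rightarrow> qdata set" where
  "qdata_box B = mat_box B \<times> mat_box B \<times> mat_box B \<times> mat_box B \<times> mat_box B \<times> mat_box B \<times>
     mat_box B \<times> mat_box B \<times> mat_box B"

lemma compact_PiE_UNIV:
  fixes S :: "'i \<Rightarrow> 'a::topological_space set"
  assumes "\<And>i. compact (S i)"
  shows "compact (PiE UNIV S)"
proof -
  have "compactin (product_topology (\<lambda>i. euclidean) UNIV) (PiE UNIV S)"
    using assms by (simp add: compactin_PiE)
  then show ?thesis by (simp add: euclidean_product_topology)
qed

lemma compact_mat_box: "compact (mat_box B)"
proof -
  have "mat_box B = PiE UNIV (\<lambda>_. PiE UNIV (\<lambda>_. cball (0::complex) B))"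
    by (auto simp: mat_box_def PiE_UNIV_domain Pi_iff)
  then show ?thesis by (simp add: compact_PiE_UNIV)
qed

lemma compact_qdata_box: "compact (qdata_box B)"
  unfolding qdata_box_def by (intro compact_Times compact_mat_box)

lemma compact_unitary_pairs: "compact {p :: cmat \<times> cmat. unitary M1 (fst p) \<and> unitary M2 (snd p)}"
proof -
  have "closed {p :: cmat \<times> cmat. unitary M1 (fst p) \<and> unitary M2 (snd p)}"
    by (intro closed_Collect_conj closed_Collect_unitary continuous_intros)
  then have "compact ((mat_box 1 \<times> mat_box 1) \<inter> {p. unitary M1 (fst p) \<and> unitary M2 (snd p)})"
    by (rule compact_Int_closed[OF compact_Times[OF compact_mat_box compact_mat_box]])
  also have "(mat_box 1 \<times> mat_box 1) \<inter> {p. unitary M1 (fst p) \<and> unitary M2 (snd p)} =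
      {p. unitary M1 (fst p) \<and> unitary M2 (snd p)}"
    using unitary_mat_box by auto
  finally show ?thesis .
qed

text \<open>The projection of a closed set along the compact group \<open>U(M\<^sub>1) \<times> U(M\<^sub>2)\<close>.\<close>

lemma closed_torus_translate_in_orbit:
  "closed {x. \<exists>g h. unitary M1 g \<and> unitary M2 h \<and> gauge_act N K M1 M2 g h x = torus_act r1 r2 s1 s2 t x}"
proof -
  define U where "U = {p :: cmat \<times> cmat. unitary M1 (fst p) \<and> unitary M2 (snd p)}"
  define Z where "Z = (U \<times> UNIV) \<inter> {p :: (cmat \<times> cmat) \<times> qdata.
     gauge_act N K M1 M2 (fst (fst p)) (snd (fst p)) (snd p) = torus_act r1 r2 s1 s2 t (snd p)}"
  have "closed {p :: (cmat \<times> cmat) \<times> qdata.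
      gauge_act N K M1 M2 (fst (fst p)) (snd (fst p)) (snd p) = torus_act r1 r2 s1 s2 t (snd p)}"
    unfolding gauge_act_components torus_act_components prod_eq_iff fst_conv snd_conv Collect_conj_eq
    by (intro closed_Int closed_Collect_mat_eq continuous_intros)
  then have "closedin (top_of_set (U \<times> UNIV)) Z"
    unfolding Z_def by (rule closedin_closed_Int)
  moreover have "top_of_set (U \<times> (UNIV :: qdata set)) = prod_topology (top_of_set U) euclidean"
    using subtopology_Times[of euclidean euclidean U "UNIV :: qdata set"]
    by (simp only: prod_topology_euclidean subtopology_UNIV)
  ultimately have "closedin (prod_topology (top_of_set U) euclidean) Z" by simp
  moreover have "closed_map (prod_topology (top_of_set U) euclidean) euclidean snd"
    using compact_unitary_pairs unfolding U_def by (intro closed_map_snd) (simp add: compact_space_subtopology)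
  ultimately have "closedin euclidean (snd ` Z)"
    unfolding closed_map_def by blast
  then have "closed (snd ` Z)" by (simp only: closed_closedin)
  moreover have "snd ` Z =
      {x. \<exists>g h. unitary M1 g \<and> unitary M2 h \<and> gauge_act N K M1 M2 g h x = torus_act r1 r2 s1 s2 t x}"
    (is "_ = ?F")
  proof (intro Set.set_eqI iffI)
    fix x assume "x \<in> snd ` Z"
    then show "x \<in> ?F" unfolding Z_def U_def by force
  next
    fix x assume "x \<in> ?F"
    then obtain g h where "unitary M1 g" "unitary M2 h"
      "gauge_act N K M1 M2 g h x = torus_act r1 r2 s1 s2 t x" by blast
    then have "((g, h), x) \<in> Z" unfolding Z_def U_def by simp
    then show "x \<in> snd ` Z" by force
  qed
  ultimately show ?thesis by simp
qed

lemma compact_fixed_level_set: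
  assumes "fixed_level_set N K M1 M2 \<xi> \<subseteq> qdata_box B"
  shows "compact (fixed_level_set N K M1 M2 \<xi>)"
proof -
  have "fixed_level_set N K M1 M2 \<xi> = level_set N K M1 M2 \<xi> \<inter> {x. \<forall>r1 r2 s1 s2 t.
       norm r1 = 1 \<and> norm r2 = 1 \<and> norm s1 = 1 \<and> norm s2 = 1 \<and> norm t = 1 \<longrightarrow>
       (\<exists>g h. unitary M1 g \<and> unitary M2 h \<and> gauge_act N K M1 M2 g h x = torus_act r1 r2 s1 s2 t x)}"
    unfolding fixed_level_set_def mem_gauge_orbit by blast
  moreover have "closed \<dots>"
    by (intro closed_Int closed_level_set closed_Collect_all closed_Collect_imp open_Collect_const
        closed_torus_translate_in_orbit)
  ultimately have "compact (qdata_box B \<inter> fixed_level_set N K M1 M2 \<xi>)"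
    using compact_Int_closed[OF compact_qdata_box] by simp
  then show ?thesis using assms by (simp add: Int_absorb1)
qed

section \<open>Flows with phases\<close>

locale phased_flow =
  fixes V :: "'v set" and w :: "'v \<Rightarrow> 'v \<Rightarrow> real" and inflow outflow :: "'v \<Rightarrow> real"
    and \<xi> :: real and \<delta> :: "'v \<Rightarrow> complex" and \<omega> \<beta> :: complex
  assumes finite_V: "finite V"
    and w_nonneg: "\<And>p q. 0 \<le> w p q"
    and inflow_nonneg: "\<And>p. 0 \<le> inflow p"
    and outflow_nonneg: "\<And>p. 0 \<le> outflow p"
    and balance: "\<And>p. p \<in> V \<Longrightarrow> (\<Sum>q\<in>V. w p q) - (\<Sum>q\<in>V. w q p) + inflow p - outflow p = \<xi>"
    and edge_phase: "\<And>p q. p \<in> V \<Longrightarrow> q \<in> V \<Longrightarrow> w p q \<noteq> 0 \<Longrightarrow> \<delta> p = \<omega> * \<delta> q"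
    and inflow_phase: "\<And>p. p \<in> V \<Longrightarrow> inflow p \<noteq> 0 \<Longrightarrow> \<delta> p = 1"
    and outflow_phase: "\<And>p. p \<in> V \<Longrightarrow> outflow p \<noteq> 0 \<Longrightarrow> \<delta> p = \<beta>"
    and phase_nonzero: "\<And>p. p \<in> V \<Longrightarrow> \<delta> p \<noteq> 0"
    and not_root_of_unity: "\<And>n. 0 < n \<Longrightarrow> \<omega> ^ n \<noteq> 1"
    and beta_not_power: "\<And>n. \<beta> \<noteq> \<omega> ^ n"
    and beta_nonzero: "\<beta> \<noteq> 0"
begin

lemma cut_balance:
  assumes AV: "A \<subseteq> V"
  shows "\<xi> * card A = (\<Sum>p\<in>A. \<Sum>q\<in>V-A. w p q) - (\<Sum>p\<in>A. \<Sum>q\<in>V-A. w q p)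
           + (\<Sum>p\<in>A. inflow p) - (\<Sum>p\<in>A. outflow p)"
proof -
  have split: "(\<Sum>q\<in>V. f q) = (\<Sum>q\<in>A. f q) + (\<Sum>q\<in>V-A. f q)" for f :: "'v \<Rightarrow> real"
    using sum.subset_diff[OF AV finite_V] by (simp add: add.commute)
  have "\<xi> * card A = (\<Sum>p\<in>A. ((\<Sum>q\<in>A. w p q) + (\<Sum>q\<in>V-A. w p q))
      - ((\<Sum>q\<in>A. w q p) + (\<Sum>q\<in>V-A. w q p)) + inflow p - outflow p)"
    using balance AV by (simp add: split[symmetric] subset_eq)
  also have "\<dots> = (\<Sum>p\<in>A. \<Sum>q\<in>A. w p q) - (\<Sum>p\<in>A. \<Sum>q\<in>A. w q p) + (\<Sum>p\<in>A. \<Sum>q\<in>V-A. w p q)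
      - (\<Sum>p\<in>A. \<Sum>q\<in>V-A. w q p) + (\<Sum>p\<in>A. inflow p) - (\<Sum>p\<in>A. outflow p)"
    by (simp add: sum.distrib sum_subtractf algebra_simps)
  also have "(\<Sum>p\<in>A. \<Sum>q\<in>A. w q p) = (\<Sum>p\<in>A. \<Sum>q\<in>A. w p q)"
    by (rule sum.swap)
  finally show ?thesis by simp
qed

text \<open>For \<open>\<xi> > 0\<close>: the vertices whose phase is not a power of \<open>\<omega>\<close> receive no inflow and send no
  edge out of their set, so their cut balance is \<open>\<le> 0\<close>; hence there are none.\<close>

lemma phase_power:
  assumes xi: "0 < \<xi>" and p: "p \<in> V"
  shows "\<exists>n. \<delta> p = \<omega> ^ n"
proof -
  define L where "L = {p\<in>V. \<forall>n. \<delta> p \<noteq> \<omega> ^ n}"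
  have LV: "L \<subseteq> V" unfolding L_def by auto
  have "w p q = 0" if pL: "p \<in> L" and qL: "q \<in> V - L" for p q
  proof (rule ccontr)
    assume "w p q \<noteq> 0"
    moreover obtain n where "\<delta> q = \<omega> ^ n" using qL unfolding L_def by auto
    ultimately have "\<delta> p = \<omega> ^ Suc n" using edge_phase pL qL LV by auto
    then show False using pL unfolding L_def by blast
  qed
  then have "(\<Sum>p\<in>L. \<Sum>q\<in>V-L. w p q) = 0" by simp
  moreover have "inflow p = 0" if pL: "p \<in> L" for p
  proof (rule ccontr)
    assume "inflow p \<noteq> 0"
    then have "\<delta> p = \<omega> ^ 0" using inflow_phase pL LV by auto
    then show False using pL unfolding L_def by blast
  qed
  ultimately have "\<xi> * card L = - (\<Sum>p\<in>L. \<Sum>q\<in>V-L. w q p) - (\<Sum>p\<in>L. outflow p)"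
    using cut_balance[OF LV] by simp
  also have "\<dots> \<le> 0"
    using w_nonneg outflow_nonneg by (smt (verit) sum_nonneg)
  finally have "L = {}"
    using xi finite_subset[OF LV finite_V] by (simp add: mult_le_0_iff)
  then show ?thesis using p unfolding L_def by blast
qed

lemma outflow_zero:
  assumes "0 < \<xi>" "p \<in> V"
  shows "outflow p = 0"
  using phase_power[OF assms] outflow_phase[OF assms(2)] beta_not_power by metis

text \<open>An edge into a vertex of phase \<open>\<omega>\<^sup>n \<delta> p\<^sub>0\<close> starts at a vertex of phase
  \<open>\<omega>\<^sup>n\<^sup>+\<^sup>1 \<delta> p\<^sub>0\<close>, so no edge enters the set \<open>A\<close>.\<close>

lemma orbit_cut_balance:
  assumes xi: "0 < \<xi>" and p0: "p0 \<in> V"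
  defines "A \<equiv> {p\<in>V. \<exists>n. \<delta> p = \<omega> ^ n * \<delta> p0}"
  shows "\<xi> * card A = (\<Sum>p\<in>A. \<Sum>q\<in>V-A. w p q) + (\<Sum>p\<in>A. inflow p)"
proof -
  have AV: "A \<subseteq> V" unfolding A_def by auto
  have "w q p = 0" if pA: "p \<in> A" and qA: "q \<in> V - A" for p q
  proof (rule ccontr)
    assume "w q p \<noteq> 0"
    moreover obtain n where "\<delta> p = \<omega> ^ n * \<delta> p0" using pA unfolding A_def by auto
    ultimately have "\<delta> q = \<omega> ^ Suc n * \<delta> p0" using edge_phase pA qA AV by auto
    then show False using qA unfolding A_def by blast
  qed
  moreover have "outflow p = 0" if "p \<in> A" for p using outflow_zero[OF xi] that AV by auto
  ultimately show ?thesis using cut_balance[OF AV] by simp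
qed

lemma positive_flow_bounds:
  assumes xi: "0 < \<xi>" and p0: "p0 \<in> V" and q0: "q0 \<in> V"
  shows "w p0 q0 \<le> \<xi> * card V" "inflow p0 \<le> \<xi> * card V"
proof -
  define A where "A = {p\<in>V. \<exists>n. \<delta> p = \<omega> ^ n * \<delta> p0}"
  have AV: "A \<subseteq> V" and p0A: "p0 \<in> A" unfolding A_def using p0 by (auto intro: exI[of _ 0])
  have finA: "finite A" using finite_subset[OF AV finite_V] .
  have bal: "\<xi> * card A = (\<Sum>p\<in>A. \<Sum>q\<in>V-A. w p q) + (\<Sum>p\<in>A. inflow p)"
    using orbit_cut_balance[OF xi p0] unfolding A_def .
  have cA: "\<xi> * card A \<le> \<xi> * card V" using card_mono[OF finite_V AV] xi by simp
  have out: "0 \<le> (\<Sum>p\<in>A. \<Sum>q\<in>V-A. w p q)" and inn: "0 \<le> (\<Sum>p\<in>A. inflow p)"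
    using w_nonneg inflow_nonneg by (auto intro: sum_nonneg)
  have "inflow p0 \<le> (\<Sum>p\<in>A. inflow p)" using p0A finA inflow_nonneg by (intro member_le_sum) auto
  then show "inflow p0 \<le> \<xi> * card V" using bal cA out by linarith
  show "w p0 q0 \<le> \<xi> * card V"
  proof (cases "w p0 q0 = 0")
    case True then show ?thesis using xi by simp
  next
    case False
    have "q0 \<notin> A"
    proof
      assume "q0 \<in> A"
      then obtain n where "\<delta> q0 = \<omega> ^ n * \<delta> p0" unfolding A_def by auto
      then have "\<delta> p0 = \<omega> ^ Suc n * \<delta> p0" using edge_phase[OF p0 q0 False] by (metis mult.assoc power_Suc)
      then have "\<omega> ^ Suc n = 1" using phase_nonzero[OF p0] by (metis mult_1 mult_cancel_right)
      then show False using not_root_of_unity[of "Suc n"] by simp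
    qed
    then have "w p0 q0 \<le> (\<Sum>q\<in>V-A. w p0 q)" using q0 finite_V w_nonneg by (intro member_le_sum) auto
    also have "\<dots> \<le> (\<Sum>p\<in>A. \<Sum>q\<in>V-A. w p q)"
      using p0A finA w_nonneg by (intro member_le_sum[where f = "\<lambda>p. \<Sum>q\<in>V-A. w p q"] sum_nonneg) auto
    finally show ?thesis using bal cA inn by linarith
  qed
qed

lemma reverse_flow: "phased_flow V (\<lambda>p q. w q p) outflow inflow (- \<xi>) (\<lambda>p. \<beta> / \<delta> p) \<omega> \<beta>"
proof
  show "(\<Sum>q\<in>V. w q p) - (\<Sum>q\<in>V. w p q) + outflow p - inflow p = - \<xi>" if "p \<in> V" for p
    using balance[OF that] by linarith
  show "\<beta> / \<delta> p = \<omega> * (\<beta> / \<delta> q)" if "p \<in> V" "q \<in> V" "w q p \<noteq> 0" for p q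
    using edge_phase[OF that(2,1,3)] phase_nonzero[OF that(1)] phase_nonzero[OF that(2)]
    by (auto simp: field_simps)
  show "\<beta> / \<delta> p = 1" if "p \<in> V" "outflow p \<noteq> 0" for p
    using outflow_phase[OF that] beta_nonzero by simp
  show "\<beta> / \<delta> p = \<beta>" if "p \<in> V" "inflow p \<noteq> 0" for p
    using inflow_phase[OF that] by simp
  show "\<beta> / \<delta> p \<noteq> 0" if "p \<in> V" for p
    using phase_nonzero[OF that] beta_nonzero by simp
qed (use finite_V w_nonneg inflow_nonneg outflow_nonneg not_root_of_unity beta_not_power beta_nonzero in auto)

lemma flow_bounds:
  assumes xi: "\<xi> \<noteq> 0" and p: "p \<in> V" and q: "q \<in> V"
  shows "w p q \<le> \<bar>\<xi>\<bar> * card V" "inflow p \<le> \<bar>\<xi>\<bar> * card V" "outflow p \<le> \<bar>\<xi>\<bar> * card V"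
proof -
  interpret rev: phased_flow V "\<lambda>p q. w q p" outflow inflow "- \<xi>" "\<lambda>p. \<beta> / \<delta> p" \<omega> \<beta>
    by (rule reverse_flow)
  have "w p q \<le> \<bar>\<xi>\<bar> * card V \<and> inflow p \<le> \<bar>\<xi>\<bar> * card V \<and> outflow p \<le> \<bar>\<xi>\<bar> * card V"
  proof (cases "0 < \<xi>")
    case True
    then show ?thesis using positive_flow_bounds[OF True p q] outflow_zero[OF True p] by auto
  next
    case False
    then have "0 < - \<xi>" using xi by linarith
    moreover have "0 \<le> - \<xi> * card V" using \<open>0 < - \<xi>\<close> by (simp add: mult_nonpos_nonneg)
    ultimately show ?thesis
      using rev.positive_flow_bounds[OF _ q p] rev.positive_flow_bounds(2)[OF _ p p] rev.outflow_zero[OF _ p]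
      by auto
  qed
  then show "w p q \<le> \<bar>\<xi>\<bar> * card V" "inflow p \<le> \<bar>\<xi>\<bar> * card V" "outflow p \<le> \<bar>\<xi>\<bar> * card V"
    by auto
qed

end

section \<open>The quiver of a point with diagonal stabiliser\<close>

text \<open>The vertices \<open>Inl i\<close> and \<open>Inr k\<close> stand for the basis vectors of \<open>\<complex>\<^sup>M\<^sup>1\<close> and
  \<open>\<complex>\<^sup>M\<^sup>2\<close>.\<close>

fun arrow_weight :: "qdata \<Rightarrow> nat + nat \<Rightarrow> nat + nat \<Rightarrow> real" where
  "arrow_weight (X, Y, I, J, X', Y', I', J', S) (Inl i) (Inl j) = (cmod (X i j))\<^sup>2 + (cmod (Y i j))\<^sup>2"
| "arrow_weight (X, Y, I, J, X', Y', I', J', S) (Inr k) (Inr l) = (cmod (X' k l))\<^sup>2 + (cmod (Y' k l))\<^sup>2"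
| "arrow_weight (X, Y, I, J, X', Y', I', J', S) (Inr k) (Inl i) = (cmod (S k i))\<^sup>2"
| "arrow_weight (X, Y, I, J, X', Y', I', J', S) (Inl i) (Inr k) = 0"

fun source_weight :: "nat \<Rightarrow> nat \<Rightarrow> qdata \<Rightarrow> nat + nat \<Rightarrow> real" where
  "source_weight N K (X, Y, I, J, X', Y', I', J', S) (Inl i) = (\<Sum>a<N. (cmod (I i a))\<^sup>2)"
| "source_weight N K (X, Y, I, J, X', Y', I', J', S) (Inr k) = (\<Sum>a<K. (cmod (I' k a))\<^sup>2)"

fun sink_weight :: "nat \<Rightarrow> nat \<Rightarrow> qdata \<Rightarrow> nat + nat \<Rightarrow> real" where
  "sink_weight N K (X, Y, I, J, X', Y', I', J', S) (Inl i) = (\<Sum>a<N. (cmod (J a i))\<^sup>2)"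
| "sink_weight N K (X, Y, I, J, X', Y', I', J', S) (Inr k) = (\<Sum>a<K. (cmod (J' a k))\<^sup>2)"

lemma mu_R_diag:
  "mu_R m n X Y I J i i = complex_of_real ((\<Sum>j<m. (cmod (X i j))\<^sup>2) - (\<Sum>j<m. (cmod (X j i))\<^sup>2)
     + ((\<Sum>j<m. (cmod (Y i j))\<^sup>2) - (\<Sum>j<m. (cmod (Y j i))\<^sup>2))
     + (\<Sum>a<n. (cmod (I i a))\<^sup>2) - (\<Sum>a<n. (cmod (J a i))\<^sup>2))"
  by (simp add: mu_R_def mmul_madj_diag madj_mmul_diag)

lemma quiver_balance:
  assumes x: "x \<in> level_set N K M1 M2 \<xi>" and p: "p \<in> {..<M1} <+> {..<M2}"
  shows "(\<Sum>q\<in>{..<M1} <+> {..<M2}. arrow_weight x p q) - (\<Sum>q\<in>{..<M1} <+> {..<M2}. arrow_weight x q p)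
    + source_weight N K x p - sink_weight N K x p = \<xi>"
proof -
  obtain X Y I J X' Y' I' J' S where xe: "x = (X, Y, I, J, X', Y', I', J', S)"
    by (cases x) auto
  have L: "(\<lambda>i j. mu_R M1 N X Y I J i j - mmul M2 (madj S) S i j) = (\<lambda>i j. complex_of_real \<xi> * mid M1 i j)"
    "(\<lambda>i j. mu_R M2 K X' Y' I' J' i j + mmul M1 S (madj S) i j) = (\<lambda>i j. complex_of_real \<xi> * mid M2 i j)"
    using x unfolding xe level_set_iff by auto
  from p consider (l) i where "i < M1" "p = Inl i" | (r) k where "k < M2" "p = Inr k" by auto
  then show ?thesis
  proof cases
    case l
    then have "mu_R M1 N X Y I J i i - mmul M2 (madj S) S i i = complex_of_real \<xi>"
      using fun_cong[OF fun_cong[OF L(1)], of i i] by (simp add: mid_def)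
    then have "(\<Sum>j<M1. (cmod (X i j))\<^sup>2) - (\<Sum>j<M1. (cmod (X j i))\<^sup>2)
      + ((\<Sum>j<M1. (cmod (Y i j))\<^sup>2) - (\<Sum>j<M1. (cmod (Y j i))\<^sup>2))
      + (\<Sum>a<N. (cmod (I i a))\<^sup>2) - (\<Sum>a<N. (cmod (J a i))\<^sup>2) - (\<Sum>k<M2. (cmod (S k i))\<^sup>2) = \<xi>"
      unfolding mu_R_diag madj_mmul_diag of_real_diff[symmetric] of_real_eq_iff .
    then show ?thesis unfolding xe l(2) by (simp add: sum.Plus sum.distrib)
  next
    case r
    then have "mu_R M2 K X' Y' I' J' k k + mmul M1 S (madj S) k k = complex_of_real \<xi>"
      using fun_cong[OF fun_cong[OF L(2)], of k k] by (simp add: mid_def)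
    then have "(\<Sum>j<M2. (cmod (X' k j))\<^sup>2) - (\<Sum>j<M2. (cmod (X' j k))\<^sup>2)
      + ((\<Sum>j<M2. (cmod (Y' k j))\<^sup>2) - (\<Sum>j<M2. (cmod (Y' j k))\<^sup>2))
      + (\<Sum>a<K. (cmod (I' k a))\<^sup>2) - (\<Sum>a<K. (cmod (J' a k))\<^sup>2) + (\<Sum>i<M1. (cmod (S k i))\<^sup>2) = \<xi>"
      unfolding mu_R_diag mmul_madj_diag of_real_add[symmetric] of_real_eq_iff .
    then show ?thesis unfolding xe r(2) by (simp add: sum.Plus sum.distrib)
  qed
qed

lemma unit_phase_eq:
  assumes "cmod b = 1" "a * z * cnj b = c * z" "z \<noteq> 0"
  shows "a = c * b"
proof -
  have "a * cnj b = c" using assms(2,3) by (metis mult.commute mult.left_commute mult_cancel_left)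
  moreover have "cnj b * b = 1"
    using assms(1) complex_norm_square[of b] by (simp add: mult.commute)
  ultimately show ?thesis by (metis mult.assoc mult.right_neutral)
qed

lemma diagm_conj_entry_phase:
  assumes "mmul m (mmul n (diagm n e) A) (madj (diagm m d)) = msc c A" "k < n" "i < m"
    "cmod (d i) = 1" "A k i \<noteq> 0"
  shows "e k = c * d i"
proof -
  have "e k * A k i * cnj (d i) = c * A k i"
    using fun_cong[OF fun_cong[OF assms(1)], of k i] assms(2,3) by (simp add: mmul_diagm_left mmul_diagm_right msc_def)
  then show ?thesis using unit_phase_eq assms(4,5) by blast
qed

lemma diagm_left_entry_phase:
  assumes "mmul m (diagm m d) A = A" "i < m" "A i a \<noteq> 0"
  shows "d i = 1"
  using fun_cong[OF fun_cong[OF assms(1)], of i a] assms(2,3) by (simp add: mmul_diagm_left)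

lemma diagm_right_entry_phase:
  assumes "mmul m A (madj (diagm m d)) = msc c A" "i < m" "A a i \<noteq> 0"
  shows "d i = cnj c"
proof -
  have "A a i * cnj (d i) = c * A a i"
    using fun_cong[OF fun_cong[OF assms(1)], of a i] assms(2) by (simp add: mmul_diagm_right msc_def)
  then show ?thesis using assms(3) by (metis complex_cnj_cnj mult.commute mult_cancel_left)
qed

lemma sum_sq_nonzero: "(\<Sum>a<n. (cmod (f a))\<^sup>2) \<noteq> 0 \<Longrightarrow> \<exists>a<n. f a \<noteq> 0"
  by (metis (mono_tags, lifting) lessThan_iff norm_zero power_zero_numeral sum.neutral)

lemma cnj_square_not_power:
  assumes "cmod \<omega> = 1" "\<And>n. 0 < n \<Longrightarrow> \<omega> ^ n \<noteq> 1"
  shows "cnj \<omega> ^ 2 \<noteq> \<omega> ^ n"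
proof
  assume "cnj \<omega> ^ 2 = \<omega> ^ n"
  moreover have "cnj \<omega> * \<omega> = 1" using assms(1) complex_norm_square[of \<omega>] by (simp add: mult.commute)
  ultimately have "\<omega> ^ (n + 2) = 1" by (metis power_add power_mult_distrib power_one)
  then show False using assms(2)[of "n + 2"] by simp
qed

lemma mat_in_mat_box:
  assumes "mat_in m n A" "0 \<le> c" "\<And>i j. i < m \<Longrightarrow> j < n \<Longrightarrow> (cmod (A i j))\<^sup>2 \<le> c"
  shows "A \<in> mat_box (c + 1)"
proof -
  have "cmod (A i j) \<le> c + 1" for i j
  proof (cases "i < m \<and> j < n")
    case True
    then have sq: "(cmod (A i j))\<^sup>2 \<le> c" using assms(3) by blast
    show ?thesis
    proof (cases "cmod (A i j) \<le> 1")
      case True then show ?thesis using assms(2) by linarith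
    next
      case False
      then have "cmod (A i j) \<le> (cmod (A i j))\<^sup>2" by (simp add: power2_eq_square mult_le_cancel_left1)
      then show ?thesis using sq by linarith
    qed
  next
    case False
    then show ?thesis using assms(1,2) by (auto simp: mat_in_def)
  qed
  then show ?thesis by (simp add: mat_box_def)
qed

lemma qdata_box_of_weight_bounds:
  assumes sh: "shaped N K M1 M2 x" and B: "0 \<le> B"
    and wb: "\<And>p q. p \<in> {..<M1} <+> {..<M2} \<Longrightarrow> q \<in> {..<M1} <+> {..<M2} \<Longrightarrow> arrow_weight x p q \<le> B"
    and ib: "\<And>p. p \<in> {..<M1} <+> {..<M2} \<Longrightarrow> source_weight N K x p \<le> B"
    and ob: "\<And>p. p \<in> {..<M1} <+> {..<M2} \<Longrightarrow> sink_weight N K x p \<le> B"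
  shows "x \<in> qdata_box (B + 1)"
proof -
  obtain X Y I J X' Y' I' J' S where xe: "x = (X, Y, I, J, X', Y', I', J', S)"
    by (cases x) auto
  have sh: "mat_in M1 M1 X" "mat_in M1 M1 Y" "mat_in M1 N I" "mat_in N M1 J"
    "mat_in M2 M2 X'" "mat_in M2 M2 Y'" "mat_in M2 K I'" "mat_in K M2 J'" "mat_in M2 M1 S"
    using sh unfolding xe shaped_def by auto
  have XY: "(cmod (X i j))\<^sup>2 \<le> B" "(cmod (Y i j))\<^sup>2 \<le> B" if "i < M1" "j < M1" for i j
    using wb[of "Inl i" "Inl j"] that by (simp_all add: xe Plus_def) (smt (verit) zero_le_power2)+
  have XY': "(cmod (X' k l))\<^sup>2 \<le> B" "(cmod (Y' k l))\<^sup>2 \<le> B" if "k < M2" "l < M2" for k l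
    using wb[of "Inr k" "Inr l"] that by (simp_all add: xe Plus_def) (smt (verit) zero_le_power2)+
  have S: "(cmod (S k i))\<^sup>2 \<le> B" if "k < M2" "i < M1" for k i
    using wb[of "Inr k" "Inl i"] that by (simp add: xe Plus_def)
  have I: "(cmod (I i a))\<^sup>2 \<le> B" if "i < M1" "a < N" for i a
    using ib[of "Inl i"] member_le_sum[of a "{..<N}" "\<lambda>a. (cmod (I i a))\<^sup>2"] that by (simp add: xe Plus_def)
  have I': "(cmod (I' k a))\<^sup>2 \<le> B" if "k < M2" "a < K" for k a
    using ib[of "Inr k"] member_le_sum[of a "{..<K}" "\<lambda>a. (cmod (I' k a))\<^sup>2"] that by (simp add: xe Plus_def)
  have J: "(cmod (J a i))\<^sup>2 \<le> B" if "a < N" "i < M1" for a i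
    using ob[of "Inl i"] member_le_sum[of a "{..<N}" "\<lambda>a. (cmod (J a i))\<^sup>2"] that by (simp add: xe Plus_def)
  have J': "(cmod (J' a k))\<^sup>2 \<le> B" if "a < K" "k < M2" for a k
    using ob[of "Inr k"] member_le_sum[of a "{..<K}" "\<lambda>a. (cmod (J' a k))\<^sup>2"] that by (simp add: xe Plus_def)
  show ?thesis
    using mat_in_mat_box[OF sh(1) B XY(1)] mat_in_mat_box[OF sh(2) B XY(2)] mat_in_mat_box[OF sh(3) B I]
      mat_in_mat_box[OF sh(4) B J] mat_in_mat_box[OF sh(5) B XY'(1)] mat_in_mat_box[OF sh(6) B XY'(2)]
      mat_in_mat_box[OF sh(7) B I'] mat_in_mat_box[OF sh(8) B J'] mat_in_mat_box[OF sh(9) B S]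
    unfolding xe qdata_box_def by simp
qed

context
  fixes N K M1 M2 :: nat and x :: qdata and d e :: "nat \<Rightarrow> complex" and \<omega> :: complex
  assumes fixed: "gauge_act N K M1 M2 (diagm M1 d) (diagm M2 e) x = torus_act \<omega> \<omega> \<omega> \<omega> \<omega> x"
    and d: "\<forall>i<M1. cmod (d i) = 1" and e: "\<forall>k<M2. cmod (e k) = 1"
begin

lemma quiver_arrow_phase:
  assumes "p \<in> {..<M1} <+> {..<M2}" "q \<in> {..<M1} <+> {..<M2}" "arrow_weight x p q \<noteq> 0"
  shows "case_sum d e p = \<omega> * case_sum d e q"
proof -
  obtain X Y I J X' Y' I' J' S where xe: "x = (X, Y, I, J, X', Y', I', J', S)"
    by (cases x) auto
  have X: "mmul M1 (mmul M1 (diagm M1 d) X) (madj (diagm M1 d)) = msc \<omega> X"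
    and Y: "mmul M1 (mmul M1 (diagm M1 d) Y) (madj (diagm M1 d)) = msc \<omega> Y"
    and X': "mmul M2 (mmul M2 (diagm M2 e) X') (madj (diagm M2 e)) = msc \<omega> X'"
    and Y': "mmul M2 (mmul M2 (diagm M2 e) Y') (madj (diagm M2 e)) = msc \<omega> Y'"
    and S: "mmul M1 (mmul M2 (diagm M2 e) S) (madj (diagm M1 d)) = msc \<omega> S"
    using fixed unfolding xe gauge_act_def torus_act_def by simp_all
  from assms(1,2) consider
      (ll) i j where "i < M1" "j < M1" "p = Inl i" "q = Inl j"
    | (rr) k l where "k < M2" "l < M2" "p = Inr k" "q = Inr l"
    | (rl) k i where "k < M2" "i < M1" "p = Inr k" "q = Inl i"
    | (lr) i k where "p = Inl i" "q = Inr k"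
    by auto
  then show ?thesis
  proof cases
    case ll
    then have "X i j \<noteq> 0 \<or> Y i j \<noteq> 0" using assms(3) unfolding xe by auto
    then show ?thesis
      using diagm_conj_entry_phase[OF X ll(1,2)] diagm_conj_entry_phase[OF Y ll(1,2)] d ll by auto
  next
    case rr
    then have "X' k l \<noteq> 0 \<or> Y' k l \<noteq> 0" using assms(3) unfolding xe by auto
    then show ?thesis
      using diagm_conj_entry_phase[OF X' rr(1,2)] diagm_conj_entry_phase[OF Y' rr(1,2)] e rr by auto
  next
    case rl
    then have "S k i \<noteq> 0" using assms(3) unfolding xe by auto
    then show ?thesis using diagm_conj_entry_phase[OF S rl(1,2)] d rl by auto
  next
    case lr
    then show ?thesis using assms(3) unfolding xe by simp
  qed
qed

lemma quiver_source_phase: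
  assumes "p \<in> {..<M1} <+> {..<M2}" "source_weight N K x p \<noteq> 0"
  shows "case_sum d e p = 1"
proof -
  obtain X Y I J X' Y' I' J' S where xe: "x = (X, Y, I, J, X', Y', I', J', S)"
    by (cases x) auto
  have I: "mmul M1 (diagm M1 d) I = I" and I': "mmul M2 (diagm M2 e) I' = I'"
    using fixed unfolding xe gauge_act_def torus_act_def by simp_all
  from assms(1) consider (l) i where "i < M1" "p = Inl i" | (r) k where "k < M2" "p = Inr k" by auto
  then show ?thesis
  proof cases
    case l
    then obtain a where "I i a \<noteq> 0" using assms(2) sum_sq_nonzero unfolding xe by auto
    then show ?thesis using diagm_left_entry_phase[OF I l(1)] l by simp
  next
    case r
    then obtain a where "I' k a \<noteq> 0" using assms(2) sum_sq_nonzero unfolding xe by auto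
    then show ?thesis using diagm_left_entry_phase[OF I' r(1)] r by simp
  qed
qed

lemma quiver_sink_phase:
  assumes "p \<in> {..<M1} <+> {..<M2}" "sink_weight N K x p \<noteq> 0"
  shows "case_sum d e p = cnj \<omega> ^ 2"
proof -
  obtain X Y I J X' Y' I' J' S where xe: "x = (X, Y, I, J, X', Y', I', J', S)"
    by (cases x) auto
  have J: "mmul M1 J (madj (diagm M1 d)) = msc (\<omega> * \<omega>) J"
    and J': "mmul M2 J' (madj (diagm M2 e)) = msc (\<omega> * \<omega>) J'"
    using fixed unfolding xe gauge_act_def torus_act_def by simp_all
  from assms(1) consider (l) i where "i < M1" "p = Inl i" | (r) k where "k < M2" "p = Inr k" by auto
  then show ?thesis
  proof cases
    case l
    then obtain a where "J a i \<noteq> 0"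
      using assms(2) sum_sq_nonzero[of "\<lambda>a. J a i" N] unfolding xe by auto
    then show ?thesis using diagm_right_entry_phase[OF J l(1)] l by (simp add: power2_eq_square)
  next
    case r
    then obtain a where "J' a k \<noteq> 0"
      using assms(2) sum_sq_nonzero[of "\<lambda>a. J' a k" K] unfolding xe by auto
    then show ?thesis using diagm_right_entry_phase[OF J' r(1)] r by (simp add: power2_eq_square)
  qed
qed

lemma quiver_phased_flow:
  assumes x: "x \<in> level_set N K M1 M2 \<xi>" and om: "cmod \<omega> = 1" "\<And>n. 0 < n \<Longrightarrow> \<omega> ^ n \<noteq> 1"
  shows "phased_flow ({..<M1} <+> {..<M2}) (arrow_weight x) (source_weight N K x) (sink_weight N K x) \<xi>
           (case_sum d e) \<omega> (cnj \<omega> ^ 2)"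
proof
  obtain X Y I J X' Y' I' J' S where xe: "x = (X, Y, I, J, X', Y', I', J', S)"
    by (cases x) auto
  show "0 \<le> arrow_weight x p q" for p q unfolding xe by (cases p; cases q) simp_all
  show "0 \<le> source_weight N K x p" for p unfolding xe by (cases p) (simp_all add: sum_nonneg)
  show "0 \<le> sink_weight N K x p" for p unfolding xe by (cases p) (simp_all add: sum_nonneg)
  show "case_sum d e p \<noteq> 0" if "p \<in> {..<M1} <+> {..<M2}" for p using that d e by auto
  show "cnj \<omega> ^ 2 \<noteq> \<omega> ^ n" for n using cnj_square_not_power[OF om] .
  show "cnj \<omega> ^ 2 \<noteq> 0" using om(1) by auto
qed (use x om quiver_balance quiver_arrow_phase quiver_source_phase quiver_sink_phase in auto)

lemma diagonal_fixed_point_in_box: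
  assumes x: "x \<in> level_set N K M1 M2 \<xi>" and xi: "\<xi> \<noteq> 0"
    and om: "cmod \<omega> = 1" "\<And>n. 0 < n \<Longrightarrow> \<omega> ^ n \<noteq> 1"
  shows "x \<in> qdata_box (\<bar>\<xi>\<bar> * (M1 + M2) + 1)"
proof -
  interpret phased_flow "{..<M1} <+> {..<M2}" "arrow_weight x" "source_weight N K x" "sink_weight N K x" \<xi>
    "case_sum d e" \<omega> "cnj \<omega> ^ 2"
    by (rule quiver_phased_flow[OF x om])
  have cardV: "card ({..<M1} <+> {..<M2}) = M1 + M2" by (simp add: card_Plus)
  show ?thesis
    using flow_bounds[OF xi] unfolding cardV
    by (intro qdata_box_of_weight_bounds[OF level_set_shaped[OF x]]) auto
qed

end

section \<open>Boundedness of the fixed part of the level set\<close>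

lemma gauge_act_qdata_box:
  assumes x: "x \<in> qdata_box B" and g: "unitary M1 g" and h: "unitary M2 h"
  shows "gauge_act N K M1 M2 g h x \<in> qdata_box (real (M1 + M2 + 1) ^ 2 * B)"
proof -
  obtain X Y I J X' Y' I' J' S where xe: "x = (X, Y, I, J, X', Y', I', J', S)"
    by (cases x) auto
  have A: "X \<in> mat_box B" "Y \<in> mat_box B" "I \<in> mat_box B" "J \<in> mat_box B" "X' \<in> mat_box B"
    "Y' \<in> mat_box B" "I' \<in> mat_box B" "J' \<in> mat_box B" "S \<in> mat_box B"
    using x unfolding xe qdata_box_def by auto
  have B: "0 \<le> B" using mat_box_nonneg[OF A(1)] .
  define c where "c = real (M1 + M2 + 1)"
  have le: "real p * (real q * B) \<le> c ^ 2 * B" if "p \<le> M1 + M2 + 1" "q \<le> M1 + M2 + 1" for p q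
    using that B unfolding c_def power2_eq_square
    by (simp add: mult.assoc mult_mono mult_nonneg_nonneg)
  have conj: "mmul p (mmul q U A) W \<in> mat_box (c ^ 2 * B)"
    if "U \<in> mat_box 1" "A \<in> mat_box B" "W \<in> mat_box 1" "p \<le> M1 + M2 + 1" "q \<le> M1 + M2 + 1" for p q U A W
  proof -
    have "mmul p (mmul q U A) W \<in> mat_box (real p * ((real q * (1 * B)) * 1))"
      by (intro mmul_mat_box that)
    then show ?thesis by (rule mat_box_mono) (use le[OF that(4,5)] in simp)
  qed
  have left: "mmul p U A \<in> mat_box (c ^ 2 * B)" "mmul p A U \<in> mat_box (c ^ 2 * B)"
    if "U \<in> mat_box 1" "A \<in> mat_box B" "p \<le> M1 + M2 + 1" for p U A
  proof -
    have "mmul p U A \<in> mat_box (real p * (1 * B))" "mmul p A U \<in> mat_box (real p * (B * 1))"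
      by (intro mmul_mat_box that)+
    then show "mmul p U A \<in> mat_box (c ^ 2 * B)" "mmul p A U \<in> mat_box (c ^ 2 * B)"
      using le[OF that(3), of 1] by (auto elim: mat_box_mono)
  qed
  show ?thesis
    unfolding xe gauge_act_def qdata_box_def c_def[symmetric]
    using conj[OF unitary_mat_box[OF g] _ unitary_mat_box[OF unitary_madj[OF g]]]
      conj[OF unitary_mat_box[OF h] _ unitary_mat_box[OF unitary_madj[OF h]]]
      conj[OF unitary_mat_box[OF h] _ unitary_mat_box[OF unitary_madj[OF g]]]
      left[OF unitary_mat_box[OF g]] left[OF unitary_mat_box[OF unitary_madj[OF g]]]
      left[OF unitary_mat_box[OF h]] left[OF unitary_mat_box[OF unitary_madj[OF h]]] A
    by simp
qed

lemma gauge_act_diagonalised: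
  assumes x: "shaped N K M1 M2 x" and g: "unitary M1 g" and h: "unitary M2 h"
    and fixed: "gauge_act N K M1 M2 g h x = torus_act r1 r2 s1 s2 t x"
    and U: "unitary M1 U" "mconj M1 (madj U) g = D" and V: "unitary M2 V" "mconj M2 (madj V) h = E"
  shows "gauge_act N K M1 M2 D E (gauge_act N K M1 M2 (madj U) (madj V) x) =
         torus_act r1 r2 s1 s2 t (gauge_act N K M1 M2 (madj U) (madj V) x)"
proof -
  have "mmul M1 D (madj U) = mmul M1 (madj U) g"
    using U unitaryD(2)[OF U(1)] mmul_mid_right[OF unitaryD(1)[OF g]] by (auto simp: mconj_def mmul_assoc)
  moreover have "mmul M2 E (madj V) = mmul M2 (madj V) h"
    using V unitaryD(2)[OF V(1)] mmul_mid_right[OF unitaryD(1)[OF h]] by (auto simp: mconj_def mmul_assoc)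
  ultimately have "gauge_act N K M1 M2 D E (gauge_act N K M1 M2 (madj U) (madj V) x) =
      gauge_act N K M1 M2 (madj U) (madj V) (gauge_act N K M1 M2 g h x)"
    by (simp add: gauge_act_comp)
  then show ?thesis using fixed by (simp add: torus_act_gauge_act)
qed

lemma exists_unit_not_root_of_unity: "\<exists>\<omega>::complex. cmod \<omega> = 1 \<and> (\<forall>n. 0 < n \<longrightarrow> \<omega> ^ n \<noteq> 1)"
proof -
  obtain \<theta> :: real where th: "\<theta> \<notin> \<rat>"
    using uncountable_UNIV_real countable_rat by (metis countable_subset subsetI)
  define \<omega> where "\<omega> = exp (complex_of_real (2 * pi * \<theta>) * \<i>)"
  have "\<omega> ^ n \<noteq> 1" if n: "0 < n" for n
  proof
    assume "\<omega> ^ n = 1"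
    then have "exp (of_nat n * (complex_of_real (2 * pi * \<theta>) * \<i>)) = 1"
      unfolding \<omega>_def by (simp add: exp_of_nat_mult)
    then obtain k :: int where "Im (of_nat n * (complex_of_real (2 * pi * \<theta>) * \<i>)) = of_int (2 * k) * pi"
      unfolding exp_eq_1 by blast
    then have "\<theta> = real_of_int k / real n" using n by (simp add: field_simps)
    then show False using th by simp
  qed
  moreover have "cmod \<omega> = 1" unfolding \<omega>_def by simp
  ultimately show ?thesis by blast
qed

lemma fixed_level_set_bounded:
  assumes xi: "\<xi> \<noteq> 0"
  shows "fixed_level_set N K M1 M2 \<xi> \<subseteq> qdata_box (real (M1 + M2 + 1) ^ 2 * (\<bar>\<xi>\<bar> * (M1 + M2) + 1))"
proof
  fix x assume "x \<in> fixed_level_set N K M1 M2 \<xi>"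
  then have xl: "x \<in> level_set N K M1 M2 \<xi>" and
    fixed: "\<And>r. cmod r = 1 \<Longrightarrow> torus_act r r r r r x \<in> gauge_orbit N K M1 M2 x"
    unfolding fixed_level_set_def by auto
  obtain \<omega> :: complex where om: "cmod \<omega> = 1" "\<And>n. 0 < n \<Longrightarrow> \<omega> ^ n \<noteq> 1"
    using exists_unit_not_root_of_unity by blast
  obtain g h where g: "unitary M1 g" and h: "unitary M2 h"
    and gh: "gauge_act N K M1 M2 g h x = torus_act \<omega> \<omega> \<omega> \<omega> \<omega> x"
    using fixed[OF om(1)] unfolding mem_gauge_orbit by blast
  obtain U d where U: "unitary M1 U" "\<forall>i<M1. cmod (d i) = 1" "mconj M1 (madj U) g = diagm M1 d"
    using unitary_diagonalization[OF g] by blast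
  obtain V e where V: "unitary M2 V" "\<forall>k<M2. cmod (e k) = 1" "mconj M2 (madj V) h = diagm M2 e"
    using unitary_diagonalization[OF h] by blast
  define x' where "x' = gauge_act N K M1 M2 (madj U) (madj V) x"
  have x'l: "x' \<in> level_set N K M1 M2 \<xi>"
    unfolding x'_def by (intro gauge_act_level_set xl unitary_madj U V)
  have "gauge_act N K M1 M2 (diagm M1 d) (diagm M2 e) x' = torus_act \<omega> \<omega> \<omega> \<omega> \<omega> x'"
    unfolding x'_def using gauge_act_diagonalised[OF level_set_shaped[OF xl] g h gh U(1,3) V(1,3)] .
  then have "x' \<in> qdata_box (\<bar>\<xi>\<bar> * (M1 + M2) + 1)"
    using diagonal_fixed_point_in_box[OF _ U(2) V(2) x'l xi om] by blast
  moreover have "x = gauge_act N K M1 M2 U V x'"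
    unfolding x'_def using gauge_act_inverse(2)[OF level_set_shaped[OF xl] U(1) V(1)] by simp
  ultimately show "x \<in> qdata_box (real (M1 + M2 + 1) ^ 2 * (\<bar>\<xi>\<bar> * (M1 + M2) + 1))"
    using gauge_act_qdata_box U(1) V(1) by metis
qed

theorem proposition6:
  fixes N K M1 M2 :: nat and \<xi> :: real
  assumes "\<xi> \<noteq> 0"
  shows "compactin (moduli_top N K M1 M2 \<xi>)
           {Q \<in> moduli N K M1 M2 \<xi>. \<forall>r1 r2 s1 s2 t.
              norm r1 = 1 \<and> norm r2 = 1 \<and> norm s1 = 1 \<and> norm s2 = 1 \<and> norm t = 1 \<longrightarrow>
              torus_act r1 r2 s1 s2 t ` Q = Q}"
  by (rule compactin_fixed_locus[OF compact_fixed_level_set[OF fixed_level_set_bounded[OF assms]]])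

end
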